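(* Let $A$ be a symmetric Frobenius algebra over a commutative ring $\Bbbk$. Then its cyclic cohomology $HC^*_\lambda(A)$ (in the sense of Connes, computed by the cyclic cochains on $A$) is a graded Lie algebra of degree $-1$.
   Context: An algebra $A$ is a symmetric Frobenius algebra if there is an isomorphism of $A$-bimodules $\Theta:A\xrightarrow{\cong}A^\vee=\mathrm{Hom}_\Bbbk(A,\Bbbk)$. The cyclic cochains of $A$ are the linear forms $f$ on $A^{\otimes n+1}$ with $f(a_n,a_0,\dots,a_{n-1})=(-1)^nf(a_0,\dots,a_n)$, forming a subcomplex of the dual of the Hochschild chain complex; $HC^*_\lambda(A)$ is its cohomology. *)

theory Defs
  imports Main
begin

definition kalg :: "('k::comm_ring_1 \<Rightarrow> 'a::ring_1 \<Rightarrow> 'a) \<Rightarrow> bool" where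
  "kalg sm \<longleftrightarrow> (\<forall>x. sm 1 x = x) \<and> (\<forall>c d x. sm (c * d) x = sm c (sm d x))
     \<and> (\<forall>c d x. sm (c + d) x = sm c x + sm d x) \<and> (\<forall>c x y. sm c (x + y) = sm c x + sm c y)
     \<and> (\<forall>c x y. sm c (x * y) = sm c x * y) \<and> (\<forall>c x y. sm c (x * y) = x * sm c y)"

definition linform :: "('k::comm_ring_1 \<Rightarrow> 'a::ring_1 \<Rightarrow> 'a) \<Rightarrow> ('a \<Rightarrow> 'k) \<Rightarrow> bool" where
  "linform sm \<phi> \<longleftrightarrow> (\<forall>x y. \<phi> (x + y) = \<phi> x + \<phi> y) \<and> (\<forall>c x. \<phi> (sm c x) = c * \<phi> x)"

text \<open>Symmetric Frobenius algebra: an A-bimodule isomorphism Theta : A -> A^v, where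
  A^v carries the bimodule structure (a.phi.b)(y) = phi(b y a).\<close>
definition symm_frobenius :: "('k::comm_ring_1 \<Rightarrow> 'a::ring_1 \<Rightarrow> 'a) \<Rightarrow> ('a \<Rightarrow> 'a \<Rightarrow> 'k) \<Rightarrow> bool" where
  "symm_frobenius sm \<Theta> \<longleftrightarrow> kalg sm
     \<and> (\<forall>x y. \<Theta> (x + y) = (\<lambda>z. \<Theta> x z + \<Theta> y z))
     \<and> (\<forall>c x. \<Theta> (sm c x) = (\<lambda>z. c * \<Theta> x z))
     \<and> bij_betw \<Theta> UNIV {\<phi>. linform sm \<phi>}
     \<and> (\<forall>a b x y. \<Theta> (a * x * b) y = \<Theta> x (b * y * a))"

text \<open>n-cochains of the (dual) Hochschild complex: linear forms on A^{\<otimes> n+1}, represented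
  as k-multilinear functions on lists of length n+1 (and 0 on lists of any other length).\<close>
definition cochain :: "('k::comm_ring_1 \<Rightarrow> 'a::ring_1 \<Rightarrow> 'a) \<Rightarrow> nat \<Rightarrow> ('a list \<Rightarrow> 'k) \<Rightarrow> bool" where
  "cochain sm n f \<longleftrightarrow> (\<forall>xs. length xs \<noteq> Suc n \<longrightarrow> f xs = 0)
     \<and> (\<forall>xs i x y c. length xs = Suc n \<and> i \<le> n \<longrightarrow>
          f (xs[i := x + y]) = f (xs[i := x]) + f (xs[i := y])
        \<and> f (xs[i := sm c x]) = c * f (xs[i := x]))"

definition hoch_d :: "nat \<Rightarrow> ('a::ring_1 list \<Rightarrow> 'k::comm_ring_1) \<Rightarrow> 'a list \<Rightarrow> 'k" where
  "hoch_d n f xs = (if length xs = n + 2 then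
      (\<Sum>i\<le>n. (-1) ^ i * f (take i xs @ [xs ! i * xs ! Suc i] @ drop (i + 2) xs))
      + (-1) ^ (n + 1) * f ((xs ! (n + 1) * xs ! 0) # take n (drop 1 xs))
    else 0)"

definition cyclic_cochain :: "('k::comm_ring_1 \<Rightarrow> 'a::ring_1 \<Rightarrow> 'a) \<Rightarrow> nat \<Rightarrow> ('a list \<Rightarrow> 'k) \<Rightarrow> bool" where
  "cyclic_cochain sm n f \<longleftrightarrow> cochain sm n f
     \<and> (\<forall>xs. length xs = Suc n \<longrightarrow> f (last xs # butlast xs) = (-1) ^ n * f xs)"

definition cyc_cocycle :: "('k::comm_ring_1 \<Rightarrow> 'a::ring_1 \<Rightarrow> 'a) \<Rightarrow> nat \<Rightarrow> ('a list \<Rightarrow> 'k) \<Rightarrow> bool" where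
  "cyc_cocycle sm n f \<longleftrightarrow> cyclic_cochain sm n f \<and> (\<forall>xs. hoch_d n f xs = 0)"

text \<open>Coboundaries in the cyclic cochain complex (degree 0 has only the zero coboundary).\<close>
definition cyc_coboundary :: "('k::comm_ring_1 \<Rightarrow> 'a::ring_1 \<Rightarrow> 'a) \<Rightarrow> nat \<Rightarrow> ('a list \<Rightarrow> 'k) \<Rightarrow> bool" where
  "cyc_coboundary sm n f \<longleftrightarrow> (\<forall>xs. f xs = 0)
     \<or> (\<exists>k u. n = Suc k \<and> cyclic_cochain sm k u \<and> f = hoch_d k u)"

text \<open>Transport of an n-cochain f in C^n(A,A^v) to the Hochschild cochain in C^n(A,A)
  via Theta^{-1}: Theta(F(a_1..a_n))(a_0) = f(a_0,a_1,..,a_n).\<close>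
definition to_hoch :: "('a \<Rightarrow> 'a \<Rightarrow> 'k) \<Rightarrow> ('a list \<Rightarrow> 'k) \<Rightarrow> 'a list \<Rightarrow> 'a" where
  "to_hoch \<Theta> f ys = the_inv_into UNIV \<Theta> (\<lambda>a. f (a # ys))"

text \<open>The bracket of degree -1 on cyclic cochains: the Gerstenhaber bracket
  [F,G] = F o G - (-1)^{(n-1)(m-1)} G o F, F o G = sum_i (-1)^{(i-1)(m-1)} F o_i G,
  transported along Theta. Signs (-1)^{(n-1)(m-1)} are written with (n+1)(m+1) (same parity,
  avoids truncated subtraction). The result is an (n+m-1)-cochain (evaluated on n+m arguments).\<close>
definition cbr :: "('a::ring_1 \<Rightarrow> 'a \<Rightarrow> 'k::comm_ring_1) \<Rightarrow> nat \<Rightarrow> nat \<Rightarrow> ('a list \<Rightarrow> 'k) \<Rightarrow> ('a list \<Rightarrow> 'k) \<Rightarrow> 'a list \<Rightarrow> 'k" where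
  "cbr \<Theta> n m f g xs = (if length xs = n + m \<and> xs \<noteq> [] then
      (\<Sum>i<n. (-1) ^ (i * (m + 1)) *
         f (hd xs # take i (tl xs) @ [to_hoch \<Theta> g (take m (drop i (tl xs)))] @ drop (i + m) (tl xs)))
      - (-1) ^ ((n + 1) * (m + 1)) *
      (\<Sum>j<m. (-1) ^ (j * (n + 1)) *
         g (hd xs # take j (tl xs) @ [to_hoch \<Theta> f (take n (drop j (tl xs)))] @ drop (j + n) (tl xs)))
    else 0)"

end

theory Submission
  imports Defs
begin

text \<open>
  Along \<open>\<Theta>\<close>, an \<open>n\<close>-cochain \<open>f\<close> becomes the Hochschild cochain \<open>F = to_hoch \<Theta> f\<close> in
  \<open>C\<^sup>n(A,A)\<close>, and \<open>cbr\<close> becomes the Gerstenhaber bracket \<open>[F,G] = F \<circ> G - \<plusminus>G \<circ> F\<close>.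
  The composition \<open>\<circ>\<close> is graded pre-Lie: in the associator \<open>(F \<circ> G) \<circ> H - F \<circ> (G \<circ> H)\<close> only
  insertions of \<open>G\<close> and \<open>H\<close> into disjoint arguments of \<open>F\<close> survive, so it is graded symmetric
  in \<open>G\<close> and \<open>H\<close>. This yields graded antisymmetry and the graded Jacobi identity on the nose.
  The product of \<open>A\<close> is a 2-cochain \<open>\<mu>\<close> with \<open>b F = \<plusminus>[\<mu>,F]\<close>, so by Jacobi the bracket
  of two cocycles is a cocycle and \<open>[b U, G] = \<plusminus>b [U,G]\<close> for a cocycle \<open>G\<close>: the bracket descends
  to cohomology. Finally, symmetry \<open>\<Theta> x y = \<Theta> y x\<close> of the Frobenius form turns the term of
  \<open>[f,g]\<close> where \<open>g\<close> is plugged into the last argument of \<open>f\<close> into the term where \<open>f\<close> is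
  plugged into the first argument of \<open>g\<close>; hence rotating the arguments of \<open>[f,g]\<close> permutes
  its terms, and the bracket of cyclic cochains is cyclic.
\<close>

section \<open>Plugging a cochain into an argument list\<close>

definition plug :: "nat \<Rightarrow> ('a list \<Rightarrow> 'a) \<Rightarrow> nat \<Rightarrow> 'a list \<Rightarrow> 'a list" where
  "plug i G m ys = take i ys @ G (take m (drop i ys)) # drop (i + m) ys"

text \<open>\<open>plug2 a X r b Y s\<close> plugs \<open>X\<close> into the block of length \<open>r\<close> at position \<open>a\<close> and \<open>Y\<close> into
  the block of length \<open>s\<close> that ends up at position \<open>b > a\<close> of the result.\<close>
definition plug2 :: "nat \<Rightarrow> ('a list \<Rightarrow> 'a) \<Rightarrow> nat \<Rightarrow> nat \<Rightarrow> ('a list \<Rightarrow> 'a) \<Rightarrow> nat \<Rightarrow> 'a list \<Rightarrow> 'a list" where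
  "plug2 a X r b Y s ys = take a ys @ X (take r (drop a ys)) # take (b - a - 1) (drop (a + r) ys)
     @ Y (take s (drop (b - 1 + r) ys)) # drop (b - 1 + r + s) ys"

lemma length_plug: "i + m \<le> length ys \<Longrightarrow> length (plug i G m ys) = length ys + 1 - m"
  unfolding plug_def by simp

lemma plug_plug_left:
  assumes "k < i" "k \<le> length ys"
  shows "plug i G m (plug k H p ys) = plug2 k H p i G m ys"
proof -
  have t: "take i (take k ys @ x # R) = take k ys @ x # take (i - k - 1) R" for x R
    using assms by (simp add: min_def) (metis Suc_diff_Suc diff_Suc_eq_diff_pred take_Suc_Cons)
  have d: "drop i (take k ys @ x # R) = drop (i - k - 1) R" for x R
    using assms by (simp add: min_def) (metis Suc_diff_Suc diff_Suc_eq_diff_pred drop_Suc_Cons)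
  have d2: "drop (i + m) (take k ys @ x # R) = drop (i + m - k - 1) R" for x R
    using assms by (simp add: min_def) (metis Suc_diff_Suc add_diff_cancel_left' diff_Suc_eq_diff_pred drop_Suc_Cons le_add_diff_inverse2 less_imp_le_nat trans_less_add1)
  show ?thesis
    using assms unfolding plug_def plug2_def t d d2
    by (simp add: add.commute add.left_commute)
qed

lemma plug_plug_right:
  assumes "i + m \<le> k" "k \<le> length ys"
  shows "plug i G m (plug k H p ys) = plug2 i G m (k - m + 1) H p ys"
proof -
  have e1: "take i (take k ys @ R) = take i ys" for R using assms by simp
  have e2: "take m (drop i (take k ys @ R)) = take m (drop i ys)" for R
    using assms by (simp add: take_drop)
  have e3: "drop (i + m) (take k ys @ R) = take (k - i - m) (drop (i + m) ys) @ R" for R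
    using assms by (simp add: drop_take)
  have e4: "k - m + 1 - i - 1 = k - i - m" "k - m + 1 - 1 + m = k" using assms by auto
  show ?thesis unfolding plug_def[of k] unfolding plug_def plug2_def e1 e2 e3 e4 by simp
qed

lemma plug_plug_nested:
  assumes "i \<le> k" "k < i + m" "k \<le> length ys"
  shows "plug i G m (plug k H p ys) = plug i (\<lambda>zs. G (plug (k - i) H p zs)) (m + p - 1) ys"
proof -
  have e1: "take i (take k ys @ R) = take i ys" for R using assms by simp
  have e2: "take m (drop i (take k ys @ x # R)) = take (k - i) (drop i ys) @ x # take (m - (k - i) - 1) R" for x R
  proof -
    have "drop i (take k ys @ x # R) = take (k-i) (drop i ys) @ x # R" using assms by (simp add: drop_take)
    moreover have "length (take (k-i) (drop i ys)) = k - i" using assms by simp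
    ultimately show ?thesis using assms by (simp add: take_Cons')
  qed
  have e3: "drop (i + m) (take k ys @ x # R) = drop (i + m - k - 1) R" for x R
    using assms by (simp add: drop_Cons')
  have e4: "take (k - i) (take (m + p - 1) (drop i ys)) = take (k - i) (drop i ys)" using assms by (simp add: min_def)
  have e5: "take p (drop (k - i) (take (m + p - 1) (drop i ys))) = take p (drop k ys)"
    using assms by (simp add: drop_take min_def)
  have e6: "drop (k - i + p) (take (m + p - 1) (drop i ys)) = take (m - (k - i) - 1) (drop (k + p) ys)"
    using assms by (simp add: drop_take add.commute diff_diff_left)
  have e7: "drop (i + m - k - 1) (drop (k + p) ys) = drop (i + (m + p - 1)) ys" using assms by simp
  show ?thesis
    unfolding plug_def[of k] unfolding plug_def e1 e2 e3 e4 e5 e6 using e7 by simp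
qed

lemma plug_slot_before:
  "length us < i \<Longrightarrow> plug i G m (us @ v # ws) = us @ v # plug (i - length us - 1) G m ws"
  unfolding plug_def
  by (simp add: take_Cons' drop_Cons')

lemma plug_slot_after: "i + m \<le> length us \<Longrightarrow> plug i G m (us @ v # ws) = plug i G m us @ v # ws"
  unfolding plug_def by simp

lemma plug_slot_inside: "i \<le> length us \<Longrightarrow> length us < i + m \<Longrightarrow>
   plug i G m (us @ v # ws) = take i us @ G (drop i us @ v # take (i + m - length us - 1) ws) # drop (i + m - length us - 1) ws"
  unfolding plug_def by (simp add: take_Cons' drop_Cons') (simp add: add.commute)

lemma plug_append: "i + m \<le> length L \<Longrightarrow> plug i G m L @ R = plug i G m (L @ R)"
  unfolding plug_def by simp

lemma plug_Cons_Suc: "plug (Suc i) G m (u # L) = u # plug i G m L"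
  unfolding plug_def by simp

lemma take_2_drop: "i + 2 \<le> length ys \<Longrightarrow> take 2 (drop i ys) = [ys ! i, ys ! Suc i]"
proof -
  assume a: "i + 2 \<le> length ys"
  then have "drop i ys = ys ! i # ys ! Suc i # drop (Suc (Suc i)) ys" by (simp add: Cons_nth_drop_Suc)
  then show ?thesis by (simp add: numeral_2_eq_2)
qed

section \<open>Signs and reindexing of sums\<close>

lemma neg_one_power_eq_if_even: "even (a + b) \<Longrightarrow> (-1::'a::ring_1) ^ a = (-1) ^ b"
  by (metis (no_types, lifting) even_add neg_one_even_power neg_one_odd_power)

lemma neg_one_power_square: "(-1::'a::ring_1) ^ a * (-1) ^ a = 1"
  by (metis power_add power_minus1_even mult_2 )

lemma neg_one_power_left_commute: "(-1::'a::ring_1) ^ a * ((-1) ^ b * y) = (-1) ^ b * ((-1) ^ a * y)"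
  by (simp add: mult.assoc[symmetric] power_add[symmetric] add.commute)

lemma neg_one_power_mult_eq_0D: "(-1::'a::ring_1) ^ e * x = 0 \<Longrightarrow> x = 0"
  by (metis mult.assoc mult_1 mult_zero_right neg_one_power_square)

lemma signed_sum_eq_0_solve:
  fixes T1 T3 :: "'a::ring_1"
  assumes eq: "(-1) ^ a * T1 + (-1) ^ c * T3 = 0" and ev: "even (a + b + c)"
  shows "- ((-1) ^ b * T3) = T1"
proof -
  have "(-1) ^ c * ((-1) ^ a * T1 + (-1) ^ c * T3) = 0" using eq by simp
  then have "(-1) ^ (c + a) * T1 + T3 = 0"
    by (simp add: distrib_left mult.assoc[symmetric] power_add neg_one_power_square)
  then have T3: "T3 = - ((-1) ^ (c + a) * T1)" by (simp add: eq_neg_iff_add_eq_0 add.commute)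
  have "(-1::'a) ^ (b + (c + a)) = 1" using ev by (simp add: add.commute add.left_commute)
  then show ?thesis unfolding T3 by (simp add: mult.assoc[symmetric] power_add[symmetric])
qed

lemma diff_scaled_antisym: "(s::'a::ring_1) * s = 1 \<Longrightarrow> A - s * B = - (s * (B - s * A))"
  by (simp add: right_diff_distrib mult.assoc[symmetric])

lemma jacobi_sign_identity:
  fixes F_GH F_HG GH_F HG_F G_HF G_FH HF_G FH_G H_FG H_GF FG_H GF_H :: "'a::ring_1"
  assumes RF: "FG_H = F_GH + (-1) ^ ((m + 1) * (p + 1)) * (FH_G - F_HG)"
    and RG: "GH_F = G_HF + (-1) ^ ((p + 1) * (n + 1)) * (GF_H - G_FH)"
    and RH: "HF_G = H_FG + (-1) ^ ((n + 1) * (m + 1)) * (HG_F - H_GF)"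
  shows "(-1) ^ ((n + 1) * (p + 1)) * (F_GH - (-1) ^ ((m + 1) * (p + 1)) * F_HG - (-1) ^ ((n + 1) * (m + p)) * (GH_F - (-1) ^ ((m + 1) * (p + 1)) * HG_F))
  + (-1) ^ ((m + 1) * (n + 1)) * (G_HF - (-1) ^ ((p + 1) * (n + 1)) * G_FH - (-1) ^ ((m + 1) * (p + n)) * (HF_G - (-1) ^ ((p + 1) * (n + 1)) * FH_G))
  + (-1) ^ ((p + 1) * (m + 1)) * (H_FG - (-1) ^ ((n + 1) * (m + 1)) * H_GF - (-1) ^ ((p + 1) * (n + m)) * (FG_H - (-1) ^ ((n + 1) * (m + 1)) * GF_H)) = 0"
  unfolding RF RG RH
  by (cases "even n"; cases "even m"; cases "even p"; simp add: even_add even_mult_iff algebra_simps)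

lemma sum_lessThan_add: "(\<Sum>k<a + (b::nat). f k) = (\<Sum>k<a. f k) + (\<Sum>k<b. f (a + k))"
  by (induction b) (simp_all add: add.assoc)

lemma sum_triangle_reindex: "(\<Sum>a<(n::nat). \<Sum>k<n - 1 - a. f a (a + 1 + k)) = (\<Sum>b<n. \<Sum>a<b. f a b)"
proof (induction n)
  case 0 then show ?case by simp
next
  case (Suc n)
  have "(\<Sum>k<Suc n - 1 - a. f a (a + 1 + k)) = (\<Sum>k<n - 1 - a. f a (a + 1 + k)) + f a n" if "a < n" for a
  proof -
    have "Suc n - 1 - a = Suc (n - 1 - a)" using that by simp
    then show ?thesis using that by simp
  qed
  then have "(\<Sum>a<n. \<Sum>k<Suc n - 1 - a. f a (a + 1 + k)) = (\<Sum>a<n. \<Sum>k<n - 1 - a. f a (a + 1 + k)) + (\<Sum>a<n. f a n)"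
    by (simp add: sum.distrib)
  then show ?case using Suc by simp
qed

section \<open>The Gerstenhaber bracket on Hochschild cochains\<close>

text \<open>Hochschild \<open>n\<close>-cochains in \<open>C\<^sup>n(A,A)\<close> are functions on lists of length \<open>n\<close>; as in \<open>cbr\<close>,
  the sign \<open>(-1)^(i(m-1))\<close> is written with exponent \<open>i(m+1)\<close>.\<close>
definition gcomp :: "nat \<Rightarrow> nat \<Rightarrow> ('a::ring_1 list \<Rightarrow> 'a) \<Rightarrow> ('a list \<Rightarrow> 'a) \<Rightarrow> 'a list \<Rightarrow> 'a" where
  "gcomp n m F G ys = (\<Sum>i<n. (-1) ^ (i * (m + 1)) * F (plug i G m ys))"

definition gbracket :: "nat \<Rightarrow> nat \<Rightarrow> ('a::ring_1 list \<Rightarrow> 'a) \<Rightarrow> ('a list \<Rightarrow> 'a) \<Rightarrow> 'a list \<Rightarrow> 'a" where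
  "gbracket n m F G ys = gcomp n m F G ys - (-1) ^ ((n + 1) * (m + 1)) * gcomp m n G F ys"

lemma gcomp_diff_left: "gcomp q n (\<lambda>z. X z - (-1) ^ e * Y z) F ys = gcomp q n X F ys - (-1) ^ e * gcomp q n Y F ys"
  unfolding gcomp_def plug_def by (simp add: sum_subtractf sum_distrib_left algebra_simps neg_one_power_left_commute)

lemma gcomp_zero_left: "gcomp q n (\<lambda>z. 0) F ys = 0"
  unfolding gcomp_def by simp

lemma gbracket_antisym: "gbracket n m F G ys = - ((-1) ^ ((n + 1) * (m + 1)) * gbracket m n G F ys)"
proof -
  have s': "(-1::'a::ring_1) ^ ((m + 1) * (n + 1)) = (-1) ^ ((n + 1) * (m + 1))" by (simp add: mult.commute)
  show ?thesis unfolding gbracket_def s' by (rule diff_scaled_antisym) (rule neg_one_power_square)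
qed

definition \<mu> :: "'a::ring_1 list \<Rightarrow> 'a" where
  "\<mu> ys = (if length ys = 2 then ys ! 0 * ys ! 1 else 0)"

lemma plug_mu: "i + 2 \<le> length ys \<Longrightarrow> plug i \<mu> 2 ys = take i ys @ [ys ! i * ys ! Suc i] @ drop (i + 2) ys"
  unfolding plug_def \<mu>_def by (simp add: take_2_drop)

lemma gcomp_two_mu:
  assumes "length ys = Suc n"
  shows "gcomp 2 n \<mu> F ys = F (take n ys) * ys ! n + (-1) ^ (n + 1) * (ys ! 0 * F (tl ys))"
proof -
  have "drop n ys = [ys ! n]" using assms by (metis Cons_nth_drop_Suc drop_eq_Nil le_refl lessI)
  then have "plug 0 F n ys = [F (take n ys), ys ! n]" unfolding plug_def by simp
  moreover have "plug 1 F n ys = [ys ! 0, F (tl ys)]" unfolding plug_def using assms by (cases ys) auto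
  ultimately show ?thesis unfolding gcomp_def using assms by (simp add: \<mu>_def numeral_2_eq_2 lessThan_Suc)
qed

text \<open>The terms of \<open>(F \<circ> G) \<circ> H\<close>: \<open>H\<close> plugged into an argument of \<open>F\<close> before \<open>G\<close>, into \<open>G\<close>,
  or after \<open>G\<close>.\<close>
definition plugs_before :: "nat \<Rightarrow> nat \<Rightarrow> nat \<Rightarrow> ('a::ring_1 list \<Rightarrow> 'a) \<Rightarrow> ('a list \<Rightarrow> 'a) \<Rightarrow> ('a list \<Rightarrow> 'a) \<Rightarrow> 'a list \<Rightarrow> 'a" where
  "plugs_before n m p F G H ys =
     (\<Sum>a<n. \<Sum>b<a. (-1) ^ (b * (p + 1)) * (-1) ^ (a * (m + 1)) * F (plug2 b H p a G m ys))"

definition plugs_after :: "nat \<Rightarrow> nat \<Rightarrow> nat \<Rightarrow> ('a::ring_1 list \<Rightarrow> 'a) \<Rightarrow> ('a list \<Rightarrow> 'a) \<Rightarrow> ('a list \<Rightarrow> 'a) \<Rightarrow> 'a list \<Rightarrow> 'a" where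
  "plugs_after n m p F G H ys =
     (\<Sum>a<n. \<Sum>k<n - 1 - a. (-1) ^ ((a + m + k) * (p + 1)) * (-1) ^ (a * (m + 1)) * F (plug2 a G m (a + 1 + k) H p ys))"

definition plugs_nested :: "nat \<Rightarrow> nat \<Rightarrow> nat \<Rightarrow> ('a::ring_1 list \<Rightarrow> 'a) \<Rightarrow> ('a list \<Rightarrow> 'a) \<Rightarrow> ('a list \<Rightarrow> 'a) \<Rightarrow> 'a list \<Rightarrow> 'a" where
  "plugs_nested n m p F G H ys =
     (\<Sum>i<n. \<Sum>j<m. (-1) ^ (i * (m + p)) * (-1) ^ (j * (p + 1)) * F (plug i (\<lambda>zs. G (plug j H p zs)) (m + p - 1) ys))"

lemma plugs_after_eq_plugs_before:
  "plugs_after n m p F G H ys = (-1) ^ ((m + 1) * (p + 1)) * plugs_before n p m F H G ys"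
proof -
  define \<sigma> where "\<sigma> = ((-1::'a) ^ ((m + 1) * (p + 1)))"
  have "plugs_after n m p F G H ys
      = (\<Sum>b<n. \<Sum>a<b. (-1) ^ ((b - 1 + m) * (p + 1)) * (-1) ^ (a * (m + 1)) * F (plug2 a G m b H p ys))"
    unfolding plugs_after_def
    using sum_triangle_reindex[where n=n and f="\<lambda>a b. (-1) ^ ((b - 1 + m) * (p + 1)) * (-1) ^ (a * (m + 1)) * F (plug2 a G m b H p ys)"]
    by (simp add: add.commute add.left_commute)
  also have "\<dots> = (\<Sum>b<n. \<Sum>a<b. \<sigma> * ((-1) ^ (a * (m + 1)) * (-1) ^ (b * (p + 1)) * F (plug2 a G m b H p ys)))"
  proof (intro sum.cong refl)
    fix b a assume "b \<in> {..<n}" "a \<in> {..<b}"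
    then obtain c where c: "b = Suc c" by (cases b) auto
    have "(-1::'a) ^ ((b - 1 + m) * (p + 1)) * (-1) ^ (a * (m + 1)) = \<sigma> * ((-1) ^ (a * (m + 1)) * (-1) ^ (b * (p + 1)))"
      unfolding \<sigma>_def power_add[symmetric] mult.assoc[symmetric]
      by (rule neg_one_power_eq_if_even) (auto simp: c even_add even_mult_iff)
    then show "(-1) ^ ((b - 1 + m) * (p + 1)) * (-1) ^ (a * (m + 1)) * F (plug2 a G m b H p ys) =
        \<sigma> * ((-1) ^ (a * (m + 1)) * (-1) ^ (b * (p + 1)) * F (plug2 a G m b H p ys))"
      by (simp add: mult.assoc)
  qed
  finally show ?thesis unfolding plugs_before_def \<sigma>_def by (simp add: sum_distrib_left)
qed

definition disjoint_plugs :: "nat \<Rightarrow> nat \<Rightarrow> nat \<Rightarrow> ('a::ring_1 list \<Rightarrow> 'a) \<Rightarrow> ('a list \<Rightarrow> 'a) \<Rightarrow> ('a list \<Rightarrow> 'a) \<Rightarrow> 'a list \<Rightarrow> 'a" where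
  "disjoint_plugs n m p F G H ys = plugs_before n m p F G H ys + plugs_after n m p F G H ys"

lemma disjoint_plugs_swap:
  "disjoint_plugs n m p F G H ys = (-1) ^ ((m + 1) * (p + 1)) * disjoint_plugs n p m F H G ys"
proof -
  have "(-1::'a) ^ ((m + 1) * (p + 1)) * (-1) ^ ((p + 1) * (m + 1)) = 1"
    by (metis mult.commute neg_one_power_square)
  then show ?thesis
    unfolding disjoint_plugs_def plugs_after_eq_plugs_before
    by (simp add: algebra_simps flip: mult.assoc)
qed

lemma sum_plug_plug_split:
  fixes F :: "'a::ring_1 list \<Rightarrow> 'a"
  assumes i: "i < n" and len: "n + m \<le> length ys + 2"
  shows "(\<Sum>k<n + m - 1. (-1) ^ (k * (p + 1)) * (-1) ^ (i * (m + 1)) * F (plug i G m (plug k H p ys))) =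
      (\<Sum>b<i. (-1) ^ (b * (p + 1)) * (-1) ^ (i * (m + 1)) * F (plug2 b H p i G m ys))
    + (\<Sum>j<m. (-1) ^ (i * (m + p)) * (-1) ^ (j * (p + 1)) * F (plug i (\<lambda>zs. G (plug j H p zs)) (m + p - 1) ys))
    + (\<Sum>k<n - 1 - i. (-1) ^ ((i + m + k) * (p + 1)) * (-1) ^ (i * (m + 1)) * F (plug2 i G m (i + 1 + k) H p ys))"
    (is "(\<Sum>k<_. ?\<phi> k) = ?A + ?B + ?C")
proof -
  have "n + m - 1 = i + (m + (n - 1 - i))" using i by auto
  then have "(\<Sum>k<n + m - 1. ?\<phi> k) = (\<Sum>k<i. ?\<phi> k) + (\<Sum>j<m. ?\<phi> (i + j)) + (\<Sum>k<n - 1 - i. ?\<phi> (i + (m + k)))"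
    by (simp add: sum_lessThan_add add.assoc)
  also have "(\<Sum>k<i. ?\<phi> k) = ?A"
  proof (rule sum.cong[OF refl])
    fix k assume "k \<in> {..<i}"
    with i len show "?\<phi> k = (-1) ^ (k * (p + 1)) * (-1) ^ (i * (m + 1)) * F (plug2 k H p i G m ys)"
      using plug_plug_left[of k i ys G m H p] by simp
  qed
  also have "(\<Sum>j<m. ?\<phi> (i + j)) = ?B"
  proof (rule sum.cong[OF refl])
    fix j assume j: "j \<in> {..<m}"
    have "(-1::'a) ^ ((i + j) * (p + 1)) * (-1) ^ (i * (m + 1)) = (-1) ^ (i * (m + p)) * (-1) ^ (j * (p + 1))"
      unfolding power_add[symmetric]
      by (intro neg_one_power_eq_if_even) (auto simp: even_add even_mult_iff algebra_simps)
    then show "?\<phi> (i + j) = (-1) ^ (i * (m + p)) * (-1) ^ (j * (p + 1)) * F (plug i (\<lambda>zs. G (plug j H p zs)) (m + p - 1) ys)"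
      using plug_plug_nested[of i "i + j" m ys G H p] i j len by simp
  qed
  also have "(\<Sum>k<n - 1 - i. ?\<phi> (i + (m + k))) = ?C"
  proof (rule sum.cong[OF refl])
    fix k assume k: "k \<in> {..<n - 1 - i}"
    have "i + (m + k) - m + 1 = i + 1 + k" by simp
    then show "?\<phi> (i + (m + k)) = (-1) ^ ((i + m + k) * (p + 1)) * (-1) ^ (i * (m + 1)) * F (plug2 i G m (i + 1 + k) H p ys)"
      using plug_plug_right[of i m "i + (m + k)" ys G H p] i k len by (simp add: add.assoc)
  qed
  finally show ?thesis .
qed

lemma gcomp_gcomp_left:
  assumes "n + m \<le> length ys + 2"
  shows "gcomp (n + m - 1) p (gcomp n m F G) H ys =
    plugs_before n m p F G H ys + plugs_nested n m p F G H ys + plugs_after n m p F G H ys"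
proof -
  have "gcomp (n + m - 1) p (gcomp n m F G) H ys =
     (\<Sum>i<n. \<Sum>k<n + m - 1. (-1) ^ (k * (p + 1)) * (-1) ^ (i * (m + 1)) * F (plug i G m (plug k H p ys)))"
    unfolding gcomp_def by (simp add: sum_distrib_left mult.assoc sum.swap[of _ "{..<n}"])
  also have "\<dots> = plugs_before n m p F G H ys + plugs_nested n m p F G H ys + plugs_after n m p F G H ys"
    unfolding plugs_before_def plugs_nested_def plugs_after_def sum.distrib[symmetric]
    by (rule sum.cong[OF refl], rule sum_plug_plug_split[OF _ assms]) simp
  finally show ?thesis .
qed

locale k_algebra =
  fixes sm :: "'k::comm_ring_1 \<Rightarrow> 'a::ring_1 \<Rightarrow> 'a"
  assumes kalg: "kalg sm"
begin

lemma sm_add_right: "sm c (x + y) = sm c x + sm c y"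
  and sm_mult_left: "sm c (x * y) = sm c x * y" and sm_mult_right: "sm c (x * y) = x * sm c y"
  using kalg unfolding kalg_def by auto

lemma sm_zero: "sm c 0 = 0"
  using sm_add_right[of c 0 0] by simp

definition k_linear :: "('a \<Rightarrow> 'a) \<Rightarrow> bool" where
  "k_linear \<phi> \<longleftrightarrow> (\<forall>x y. \<phi> (x + y) = \<phi> x + \<phi> y) \<and> (\<forall>c x. \<phi> (sm c x) = sm c (\<phi> x))"

lemma k_linear_add: "k_linear \<phi> \<Longrightarrow> \<phi> (x + y) = \<phi> x + \<phi> y" by (simp add: k_linear_def)
lemma k_linear_sm: "k_linear \<phi> \<Longrightarrow> \<phi> (sm c x) = sm c (\<phi> x)" by (simp add: k_linear_def)
lemma k_linear_zero: "k_linear \<phi> \<Longrightarrow> \<phi> 0 = 0"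
  using k_linear_add[of \<phi> 0 0] by simp
lemma k_linear_neg: "k_linear \<phi> \<Longrightarrow> \<phi> (- x) = - \<phi> x"
  using k_linear_add[of \<phi> x "-x"] k_linear_zero[of \<phi>] by (metis add.commute eq_neg_iff_add_eq_0 add.right_inverse)
lemma k_linear_sign: "k_linear \<phi> \<Longrightarrow> \<phi> ((-1) ^ e * x) = (-1) ^ e * \<phi> x"
  by (induction e) (auto simp: k_linear_neg)
lemma k_linear_sum: "k_linear \<phi> \<Longrightarrow> \<phi> (sum f S) = sum (\<lambda>j. \<phi> (f j)) S"
  by (induction S rule: infinite_finite_induct) (auto simp: k_linear_zero k_linear_add)
lemma k_linear_signed_sum: "k_linear \<phi> \<Longrightarrow> \<phi> (\<Sum>j\<in>S. (-1) ^ e j * f j) = (\<Sum>j\<in>S. (-1) ^ e j * \<phi> (f j))"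
  by (simp add: k_linear_sum k_linear_sign)

lemma k_linear_comp: "k_linear \<phi> \<Longrightarrow> k_linear \<psi> \<Longrightarrow> k_linear (\<lambda>x. \<phi> (\<psi> x))"
  by (simp add: k_linear_def)
lemma k_linear_add_fun: "k_linear \<phi> \<Longrightarrow> k_linear \<psi> \<Longrightarrow> k_linear (\<lambda>x. \<phi> x + \<psi> x)"
  by (simp add: k_linear_def sm_add_right algebra_simps)
lemma k_linear_zero_fun: "k_linear (\<lambda>x. 0)"
  by (simp add: k_linear_def sm_zero)
lemma k_linear_sign_fun: "k_linear \<phi> \<Longrightarrow> k_linear (\<lambda>x. (-1) ^ e * \<phi> x)"
  by (simp add: k_linear_def sm_mult_right algebra_simps)
lemma k_linear_sum_fun: "(\<And>j. j \<in> S \<Longrightarrow> k_linear (\<phi> j)) \<Longrightarrow> k_linear (\<lambda>x. \<Sum>j\<in>S. \<phi> j x)"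
  by (induction S rule: infinite_finite_induct) (auto simp: k_linear_zero_fun k_linear_add_fun)

definition hoch_cochain :: "nat \<Rightarrow> ('a list \<Rightarrow> 'a) \<Rightarrow> bool" where
  "hoch_cochain n F \<longleftrightarrow> (\<forall>ys. length ys \<noteq> n \<longrightarrow> F ys = 0)
     \<and> (\<forall>us ws. length us + length ws + 1 = n \<longrightarrow> k_linear (\<lambda>v. F (us @ v # ws)))"

lemma hoch_cochain_zero: "hoch_cochain n F \<Longrightarrow> length ys \<noteq> n \<Longrightarrow> F ys = 0" by (simp add: hoch_cochain_def)
lemma hoch_cochain_linear: "hoch_cochain n F \<Longrightarrow> length us + length ws + 1 = n \<Longrightarrow> k_linear (\<lambda>v. F (us @ v # ws))"
  by (simp add: hoch_cochain_def)

lemma hoch_cochain_zero_slot: "hoch_cochain n F \<Longrightarrow> F (us @ 0 # ws) = 0"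
proof (cases "length us + length ws + 1 = n")
  case True
  assume "hoch_cochain n F"
  from k_linear_zero[OF hoch_cochain_linear[OF this True]] show ?thesis .
next
  case False
  assume "hoch_cochain n F"
  from hoch_cochain_zero[OF this] False show ?thesis by simp
qed

lemma hoch_cochain_plug_eq_0:
  assumes F: "hoch_cochain n F" and G: "hoch_cochain m G" and len: "length ys \<noteq> n + m - 1" and i: "i < n"
  shows "F (plug i G m ys) = 0"
proof (cases "i + m \<le> length ys")
  case True
  then have "length (plug i G m ys) \<noteq> n" using len length_plug[OF True, of G] i by auto
  then show ?thesis using F hoch_cochain_zero by blast
next
  case False
  show ?thesis
  proof (cases "length (take m (drop i ys)) = m")
    case True
    then have "m = 0" "length ys < i" using False by auto
    then have "length (plug i G m ys) \<noteq> n" using len unfolding plug_def by simp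
    then show ?thesis using F hoch_cochain_zero by blast
  next
    case False
    then have "G (take m (drop i ys)) = 0" using hoch_cochain_zero[OF G] by blast
    then show ?thesis unfolding plug_def using hoch_cochain_zero_slot[OF F] by simp
  qed
qed

lemma hoch_cochain_plug_linear:
  assumes F: "hoch_cochain n F" and G: "hoch_cochain m G"
    and len: "length us + length ws + 1 = n + m - 1" and i: "i < n"
  shows "k_linear (\<lambda>v. F (plug i G m (us @ v # ws)))"
proof -
  consider "length us < i" | "i + m \<le> length us" | "i \<le> length us" "length us < i + m" by linarith
  then show ?thesis
  proof cases
    case 1
    have "length (plug (i - length us - 1) G m ws) = length ws + 1 - m"
      by (rule length_plug) (use 1 i len in linarith)
    then show ?thesis unfolding plug_slot_before[OF 1]
      by (intro hoch_cochain_linear[OF F]) (use 1 i len in simp)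
  next
    case 2
    have "length (plug i G m us) = length us + 1 - m" by (rule length_plug[OF 2])
    then show ?thesis unfolding plug_slot_after[OF 2]
      by (intro hoch_cochain_linear[OF F]) (use 2 i len in simp)
  next
    case 3
    have "k_linear (\<lambda>x. F (take i us @ x # drop (i + m - length us - 1) ws))"
      by (rule hoch_cochain_linear[OF F]) (use 3 i len in simp)
    moreover have "k_linear (\<lambda>v. G (drop i us @ v # take (i + m - length us - 1) ws))"
      by (rule hoch_cochain_linear[OF G]) (use 3 i len in simp)
    ultimately show ?thesis unfolding plug_slot_inside[OF 3] by (rule k_linear_comp)
  qed
qed

lemma hoch_cochain_gcomp:
  assumes F: "hoch_cochain n F" and G: "hoch_cochain m G"
  shows "hoch_cochain (n + m - 1) (gcomp n m F G)"
  unfolding hoch_cochain_def gcomp_def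
  using hoch_cochain_plug_eq_0[OF F G] hoch_cochain_plug_linear[OF F G]
  by (auto intro!: k_linear_sum_fun k_linear_sign_fun)

lemma hoch_cochain_diff_sign:
  assumes "hoch_cochain N X" "hoch_cochain N Y"
  shows "hoch_cochain N (\<lambda>ys. X ys - (-1) ^ e * Y ys)"
proof -
  have "k_linear (\<lambda>v. X (us @ v # ws) - (-1) ^ e * Y (us @ v # ws))" if "length us + length ws + 1 = N" for us ws
  proof -
    have "k_linear (\<lambda>v. X (us @ v # ws) + (-1) ^ (Suc e) * Y (us @ v # ws))"
      by (intro k_linear_add_fun k_linear_sign_fun hoch_cochain_linear[OF assms(1)] hoch_cochain_linear[OF assms(2)]) (use that in auto)
    then show ?thesis by simp
  qed
  then show ?thesis using assms unfolding hoch_cochain_def by auto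
qed

lemma hoch_cochain_gbracket: "hoch_cochain n F \<Longrightarrow> hoch_cochain m G \<Longrightarrow> hoch_cochain (n + m - 1) (gbracket n m F G)"
proof -
  assume a: "hoch_cochain n F" "hoch_cochain m G"
  have "hoch_cochain (n + m - 1) (gcomp m n G F)" using hoch_cochain_gcomp[OF a(2) a(1)] by (simp add: add.commute)
  from hoch_cochain_diff_sign[OF hoch_cochain_gcomp[OF a] this] show ?thesis unfolding gbracket_def .
qed

lemma gcomp_gcomp_right:
  assumes F: "hoch_cochain n F" and len: "length ys = n + m + p - 2"
  shows "gcomp n (m + p - 1) F (gcomp m p G H) ys = plugs_nested n m p F G H ys"
proof (cases "m = 0")
  case True
  then show ?thesis unfolding gcomp_def plug_def plugs_nested_def using hoch_cochain_zero_slot[OF F] by simp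
next
  case False
  have "F (plug i (gcomp m p G H) (m + p - 1) ys) =
        (\<Sum>j<m. (-1) ^ (j * (p + 1)) * F (plug i (\<lambda>zs. G (plug j H p zs)) (m + p - 1) ys))" if "i < n" for i
  proof -
    have k: "k_linear (\<lambda>v. F (take i ys @ v # drop (i + (m + p - 1)) ys))"
      by (rule hoch_cochain_linear[OF F]) (use that False len in simp)
    show ?thesis unfolding plug_def[of i] gcomp_def k_linear_signed_sum[OF k] by simp
  qed
  moreover have "m + p - 1 + 1 = m + p" using False by simp
  ultimately show ?thesis
    unfolding gcomp_def[of n] plugs_nested_def by (simp add: sum_distrib_left mult.assoc)
qed

lemma gcomp_diff_right:
  assumes F: "hoch_cochain n F"
  shows "gcomp n q F (\<lambda>z. X z - (-1) ^ e * Y z) ys = gcomp n q F X ys - (-1) ^ e * gcomp n q F Y ys"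
proof -
  have "F (plug i (\<lambda>z. X z - (-1) ^ e * Y z) q ys) = F (plug i X q ys) - (-1) ^ e * F (plug i Y q ys)" for i
  proof (cases "length (take i ys) + length (drop (i + q) ys) + 1 = n")
    case True
    have k: "k_linear (\<lambda>v. F (take i ys @ v # drop (i + q) ys))" by (rule hoch_cochain_linear[OF F True])
    have sx: "X z - (-1) ^ e * Y z = X z + (-1) ^ Suc e * Y z" for z by simp
    have "F (take i ys @ (X z - (-1) ^ e * Y z) # drop (i + q) ys) =
       F (take i ys @ X z # drop (i + q) ys) + (-1) ^ Suc e * F (take i ys @ Y z # drop (i + q) ys)" for z
      unfolding sx by (simp only: k_linear_add[OF k] k_linear_sign[OF k])
    then show ?thesis unfolding plug_def by simp
  next
    case False
    then show ?thesis unfolding plug_def using hoch_cochain_zero[OF F] by simp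
  qed
  then show ?thesis unfolding gcomp_def
    by (simp add: right_diff_distrib sum_subtractf sum_distrib_left neg_one_power_left_commute)
qed

lemma gcomp_zero_right: "hoch_cochain n F \<Longrightarrow> gcomp n q F (\<lambda>z. 0) ys = 0"
  unfolding gcomp_def plug_def using hoch_cochain_zero_slot[of n F] by simp

lemma gcomp_assoc_eq_disjoint_plugs:
  assumes F: "hoch_cochain n F" and len: "length ys = n + m + p - 2" and np: "2 \<le> n + m + p"
  shows "gcomp (n + m - 1) p (gcomp n m F G) H ys - gcomp n (m + p - 1) F (gcomp m p G H) ys
    = disjoint_plugs n m p F G H ys"
proof -
  have le: "n + m \<le> length ys + 2" using len np by simp
  show ?thesis
    unfolding gcomp_gcomp_left[OF le] gcomp_gcomp_right[OF F len] disjoint_plugs_def by (simp add: algebra_simps)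
qed

lemma gcomp_pre_Lie:
  assumes F: "hoch_cochain n F" and len: "length ys = n + m + p - 2" and np: "2 \<le> n + m + p"
  shows "gcomp (n + m - 1) p (gcomp n m F G) H ys = gcomp n (m + p - 1) F (gcomp m p G H) ys
    + (-1) ^ ((m + 1) * (p + 1)) * (gcomp (p + n - 1) m (gcomp n p F H) G ys - gcomp n (m + p - 1) F (gcomp p m H G) ys)"
proof -
  have "gcomp (n + p - 1) m (gcomp n p F H) G ys - gcomp n (p + m - 1) F (gcomp p m H G) ys
      = disjoint_plugs n p m F H G ys"
    using len np by (intro gcomp_assoc_eq_disjoint_plugs[OF F]) auto
  then show ?thesis
    using gcomp_assoc_eq_disjoint_plugs[OF F len np, of G H] disjoint_plugs_swap[of n m p F G H ys]
    by (simp add: algebra_simps)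
qed

lemma gbracket_gbracket_expand:
  assumes F: "hoch_cochain n F"
  shows "gbracket n (m + p - 1) F (gbracket m p G H) ys = gcomp n (m + p - 1) F (gcomp m p G H) ys
     - (-1) ^ ((m + 1) * (p + 1)) * gcomp n (m + p - 1) F (gcomp p m H G) ys
     - (-1) ^ ((n + 1) * (m + p)) * (gcomp (m + p - 1) n (gcomp m p G H) F ys
        - (-1) ^ ((m + 1) * (p + 1)) * gcomp (m + p - 1) n (gcomp p m H G) F ys)"
proof (cases "m + p = 0")
  case True
  then have "gbracket m p G H = (\<lambda>z. 0)" "gcomp m p G H = (\<lambda>z. 0)" "gcomp p m H G = (\<lambda>z. 0)"
    by (auto simp: gbracket_def gcomp_def)
  then show ?thesis by (simp add: gbracket_def gcomp_zero_left gcomp_zero_right[OF F])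
next
  case False
  then have "m + p - 1 + 1 = m + p" by simp
  then show ?thesis
    unfolding gbracket_def[of n] unfolding gbracket_def gcomp_diff_left gcomp_diff_right[OF F] by simp
qed

lemma gbracket_jacobi:
  assumes F: "hoch_cochain n F" and G: "hoch_cochain m G" and H: "hoch_cochain p H"
    and len: "length ys = n + m + p - 2" and np: "2 \<le> n + m + p"
  shows "(-1) ^ ((n + 1) * (p + 1)) * gbracket n (m + p - 1) F (gbracket m p G H) ys
    + (-1) ^ ((m + 1) * (n + 1)) * gbracket m (p + n - 1) G (gbracket p n H F) ys
    + (-1) ^ ((p + 1) * (m + 1)) * gbracket p (n + m - 1) H (gbracket n m F G) ys = 0"
  unfolding gbracket_gbracket_expand[OF F] gbracket_gbracket_expand[OF G] gbracket_gbracket_expand[OF H]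
proof (rule jacobi_sign_identity)
  show "gcomp (n + m - 1) p (gcomp n m F G) H ys = gcomp n (m + p - 1) F (gcomp m p G H) ys
    + (-1) ^ ((m + 1) * (p + 1)) * (gcomp (p + n - 1) m (gcomp n p F H) G ys - gcomp n (m + p - 1) F (gcomp p m H G) ys)"
    by (rule gcomp_pre_Lie[OF F len np])
  show "gcomp (m + p - 1) n (gcomp m p G H) F ys = gcomp m (p + n - 1) G (gcomp p n H F) ys
    + (-1) ^ ((p + 1) * (n + 1)) * (gcomp (n + m - 1) p (gcomp m n G F) H ys - gcomp m (p + n - 1) G (gcomp n p F H) ys)"
    using gcomp_pre_Lie[OF G, of ys p n H F] len np by (simp add: ac_simps)
  show "gcomp (p + n - 1) m (gcomp p n H F) G ys = gcomp p (n + m - 1) H (gcomp n m F G) ys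
    + (-1) ^ ((n + 1) * (m + 1)) * (gcomp (m + p - 1) n (gcomp p m H G) F ys - gcomp p (n + m - 1) H (gcomp m n G F) ys)"
    using gcomp_pre_Lie[OF H, of ys n m F G] len np by (simp add: ac_simps)
qed

lemma hoch_cochain_sign: "hoch_cochain N X \<Longrightarrow> hoch_cochain N (\<lambda>ys. (-1) ^ e * X ys)"
  unfolding hoch_cochain_def by (auto intro: k_linear_sign_fun)

lemma gcomp_sign_right:
  assumes F: "hoch_cochain n F"
  shows "gcomp n q F (\<lambda>z. (-1) ^ e * Y z) ys = (-1) ^ e * gcomp n q F Y ys"
proof -
  have "F (plug i (\<lambda>z. (-1) ^ e * Y z) q ys) = (-1) ^ e * F (plug i Y q ys)" for i
  proof (cases "length (take i ys) + length (drop (i + q) ys) + 1 = n")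
    case True
    have k: "k_linear (\<lambda>v. F (take i ys @ v # drop (i + q) ys))" by (rule hoch_cochain_linear[OF F True])
    show ?thesis unfolding plug_def by (rule k_linear_sign[OF k])
  next
    case False
    then show ?thesis unfolding plug_def using hoch_cochain_zero[OF F] by simp
  qed
  then show ?thesis unfolding gcomp_def by (simp add: sum_distrib_left neg_one_power_left_commute)
qed

lemma gbracket_sign_left: "hoch_cochain m G \<Longrightarrow> gbracket n m (\<lambda>ys. (-1) ^ e * X ys) G ys = (-1) ^ e * gbracket n m X G ys"
  unfolding gbracket_def gcomp_sign_right
  by (simp add: gcomp_def sum_distrib_left neg_one_power_left_commute right_diff_distrib)

lemma gbracket_zero_right: "hoch_cochain n F \<Longrightarrow> gbracket n q F (\<lambda>_. 0) ys = 0"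
  unfolding gbracket_def using gcomp_zero_right[of n F q ys] gcomp_zero_left[of q n F ys] by simp

lemma hoch_cochain_mu: "hoch_cochain 2 \<mu>"
  unfolding hoch_cochain_def
proof (intro conjI allI impI)
  fix ys :: "'a list" assume "length ys \<noteq> 2" then show "\<mu> ys = 0" by (simp add: \<mu>_def)
next
  fix us ws :: "'a list" assume l: "length us + length ws + 1 = 2"
  then consider "us = [] \<and> length ws = 1" | "length us = 1 \<and> ws = []" by (cases us) auto
  then show "k_linear (\<lambda>v. \<mu> (us @ v # ws))"
  proof cases
    case 1
    then obtain w where "ws = [w]" by (cases ws) auto
    then show ?thesis using 1 unfolding k_linear_def \<mu>_def by (simp add: distrib_right sm_mult_left)
  next
    case 2
    then obtain u where "us = [u]" by (cases us) (auto simp: length_Suc_conv)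
    then show ?thesis using 2 unfolding k_linear_def \<mu>_def by (simp add: distrib_left sm_mult_right)
  qed
qed

lemma gbracket_mu_bracket:
  assumes U: "hoch_cochain k U" and G: "hoch_cochain m G" and G0: "gbracket 2 m \<mu> G = (\<lambda>_. 0)" and len: "length ys = k + m"
  shows "gbracket (k + 1) m (gbracket 2 k \<mu> U) G ys = gbracket 2 (k + m - 1) \<mu> (gbracket k m U G) ys"
proof -
  have J: "(-1) ^ ((2 + 1) * (m + 1)) * gbracket 2 (k + m - 1) \<mu> (gbracket k m U G) ys
    + (-1) ^ ((k + 1) * (2 + 1)) * gbracket k (m + 2 - 1) U (gbracket m 2 G \<mu>) ys
    + (-1) ^ ((m + 1) * (k + 1)) * gbracket m (2 + k - 1) G (gbracket 2 k \<mu> U) ys = 0"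
    by (rule gbracket_jacobi[OF hoch_cochain_mu U G]) (use len in auto)
  have "gbracket m 2 G \<mu> = (\<lambda>_. 0)" using gbracket_antisym[of m 2 G \<mu>] G0 by (auto intro!: ext)
  then have "gbracket k (m + 2 - 1) U (gbracket m 2 G \<mu>) ys = 0" using gbracket_zero_right[OF U] by simp
  then have J': "(-1) ^ ((2 + 1) * (m + 1)) * gbracket 2 (k + m - 1) \<mu> (gbracket k m U G) ys
    + (-1) ^ ((m + 1) * (k + 1)) * gbracket m (k + 1) G (gbracket 2 k \<mu> U) ys = 0" using J by simp
  have "- ((-1) ^ ((k + 1 + 1) * (m + 1)) * gbracket m (k + 1) G (gbracket 2 k \<mu> U) ys) = gbracket 2 (k + m - 1) \<mu> (gbracket k m U G) ys"
    by (rule signed_sum_eq_0_solve[OF J']) (simp add: even_add even_mult_iff)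
  then show ?thesis using gbracket_antisym[of "k + 1" m "gbracket 2 k \<mu> U" G ys] by simp
qed

lemma gbracket_mu_closed:
  assumes F: "hoch_cochain n F" and G: "hoch_cochain m G"
    and F0: "gbracket 2 n \<mu> F = (\<lambda>_. 0)" and G0: "gbracket 2 m \<mu> G = (\<lambda>_. 0)"
  shows "gbracket 2 (n + m - 1) \<mu> (gbracket n m F G) ys = 0"
proof -
  consider "n + m = 0" | "length ys = n + m" | "n + m \<noteq> 0" "length ys \<noteq> n + m" by blast
  then show ?thesis
  proof cases
    case 1
    then have "gbracket n m F G = (\<lambda>_. 0)" by (auto simp: gbracket_def gcomp_def)
    then show ?thesis using gbracket_zero_right[OF hoch_cochain_mu] by simp
  next
    case 2
    then show ?thesis
      using gbracket_mu_bracket[OF F G G0 2] unfolding F0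
      by (simp add: gbracket_def gcomp_zero_left gcomp_zero_right[OF G])
  next
    case 3
    have "hoch_cochain (2 + (n + m - 1) - 1) (gbracket 2 (n + m - 1) \<mu> (gbracket n m F G))"
      by (intro hoch_cochain_gbracket hoch_cochain_mu F G)
    then show ?thesis using 3 hoch_cochain_zero by fastforce
  qed
qed

end

section \<open>Cyclic cochains\<close>

lemma cochain_zero: "cochain sm n f \<Longrightarrow> length xs \<noteq> Suc n \<Longrightarrow> f xs = 0"
  unfolding cochain_def by blast

lemma cochain_lin:
  assumes "cochain sm n f" "length xs = Suc n" "i \<le> n"
  shows "f (xs[i := x + y]) = f (xs[i := x]) + f (xs[i := y])" "f (xs[i := sm c x]) = c * f (xs[i := x])"
  using assms unfolding cochain_def by blast+

lemma list_update_Cons_middle: "(a # us @ v # ws)[Suc (length us) := x] = a # us @ x # ws"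
  by (simp add: list_update_append)

lemma cochain_add_slot:
  assumes g: "cochain sm m g"
  shows "g (a # us @ (x + y) # ws) = g (a # us @ x # ws) + g (a # us @ y # ws)"
proof (cases "length (a # us @ x # ws) = Suc m")
  case True
  have i: "Suc (length us) \<le> m" using True by simp
  show ?thesis using cochain_lin(1)[OF g True i, of x y] unfolding list_update_Cons_middle
    by (simp add: list_update_append)
next
  case False
  then show ?thesis using cochain_zero[OF g] by simp
qed

lemma cochain_scale_slot:
  assumes g: "cochain sm m g"
  shows "g (a # us @ sm c x # ws) = c * g (a # us @ x # ws)"
proof (cases "length (a # us @ x # ws) = Suc m")
  case True
  have i: "Suc (length us) \<le> m" using True by simp
  show ?thesis using cochain_lin(2)[OF g True i, of c x] unfolding list_update_Cons_middle
    by (simp add: list_update_append)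
next
  case False
  then show ?thesis using cochain_zero[OF g] by simp
qed

lemma cyclic_cochain_cochain: "cyclic_cochain sm n f \<Longrightarrow> cochain sm n f"
  unfolding cyclic_cochain_def by blast

lemma cyc_cocycle_cochain: "cyc_cocycle sm n f \<Longrightarrow> cochain sm n f"
  unfolding cyc_cocycle_def by (rule cyclic_cochain_cochain) blast

lemma cyclic_cochain_rotate:
  assumes f: "cyclic_cochain sm n f"
  shows "f (z # L) = (-1) ^ n * f (L @ [z])"
proof (cases "length L = n")
  case True
  then show ?thesis using f unfolding cyclic_cochain_def
    by (metis butlast_snoc last_snoc length_append_singleton)
next
  case False
  have c: "cochain sm n f" using f unfolding cyclic_cochain_def by blast
  then show ?thesis using False cochain_zero[OF c] by simp
qed

lemma hoch_d_zero: "hoch_d n (\<lambda>_. 0) = (\<lambda>_. 0)"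
  unfolding hoch_d_def by auto

lemma hoch_d_scale: "hoch_d n (\<lambda>xs. c * h xs) = (\<lambda>xs. c * hoch_d n h xs)"
  unfolding hoch_d_def by (intro ext) (simp add: sum_distrib_left mult.left_commute right_diff_distrib)

lemma cyclic_cochain_scale:
  assumes h: "cyclic_cochain sm N h"
  shows "cyclic_cochain sm N (\<lambda>xs. c * h xs)"
proof -
  have hc': "cochain sm N h" using h by (rule cyclic_cochain_cochain)
  have "cochain sm N (\<lambda>xs. c * h xs)"
    using hc' unfolding cochain_def by (simp add: distrib_left mult.left_commute)
  moreover have "\<forall>xs. length xs = Suc N \<longrightarrow> c * h (last xs # butlast xs) = (-1) ^ N * (c * h xs)"
    using h unfolding cyclic_cochain_def by (simp add: mult.left_commute)
  ultimately show ?thesis unfolding cyclic_cochain_def by simp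
qed

lemma cochain_zero_fun: "cochain sm N (\<lambda>_. 0)"
  unfolding cochain_def by simp

lemma cyc_coboundary_zero: "(\<And>xs. f xs = 0) \<Longrightarrow> cyc_coboundary sm n f"
  unfolding cyc_coboundary_def by simp

lemma cyc_coboundary_scale:
  assumes "cyc_coboundary sm n f"
  shows "cyc_coboundary sm n (\<lambda>xs. c * f xs)"
proof -
  from assms consider "\<forall>xs. f xs = 0" | k u where "n = Suc k" "cyclic_cochain sm k u" "f = hoch_d k u"
    unfolding cyc_coboundary_def by blast
  then show ?thesis
  proof cases
    case 1
    then show ?thesis by (simp add: cyc_coboundary_zero)
  next
    case 2
    then have "(\<lambda>xs. c * f xs) = hoch_d k (\<lambda>xs. c * u xs)" by (simp add: hoch_d_scale)
    with 2 show ?thesis unfolding cyc_coboundary_def by (blast intro: cyclic_cochain_scale)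
  qed
qed

section \<open>Transport along the Frobenius isomorphism\<close>

locale symm_frob = k_algebra sm for sm :: "'k::comm_ring_1 \<Rightarrow> 'a::ring_1 \<Rightarrow> 'a" +
  fixes \<Theta> :: "'a \<Rightarrow> 'a \<Rightarrow> 'k"
  assumes symm_frob_Theta: "symm_frobenius sm \<Theta>"
begin

lemma Theta_add: "\<Theta> (x + y) z = \<Theta> x z + \<Theta> y z"
  using symm_frob_Theta unfolding symm_frobenius_def by metis
lemma Theta_sm: "\<Theta> (sm c x) z = c * \<Theta> x z"
  using symm_frob_Theta unfolding symm_frobenius_def by metis
lemma Theta_bij: "bij_betw \<Theta> UNIV {\<phi>. linform sm \<phi>}"
  using symm_frob_Theta unfolding symm_frobenius_def by blast
lemma Theta_bimodule: "\<Theta> (a * x * b) y = \<Theta> x (b * y * a)"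
  using symm_frob_Theta unfolding symm_frobenius_def by blast
lemma Theta_inj: "inj \<Theta>" using Theta_bij bij_betw_def by blast
lemma Theta_linform: "linform sm (\<Theta> x)" using Theta_bij bij_betwE by blast
lemma Theta_add_right: "\<Theta> x (y + z) = \<Theta> x y + \<Theta> x z" using Theta_linform unfolding linform_def by blast
lemma Theta_sm_right: "\<Theta> x (sm c y) = c * \<Theta> x y" using Theta_linform unfolding linform_def by blast

lemma Theta_zero: "\<Theta> 0 z = 0"
  using Theta_add[of 0 0 z] by simp
lemma Theta_zero_fun: "\<Theta> 0 = (\<lambda>z. 0)" using Theta_zero by auto
lemma Theta_neg: "\<Theta> (- x) z = - \<Theta> x z"
  using Theta_add[of x "-x" z] Theta_zero by (metis add.commute eq_neg_iff_add_eq_0 add.right_inverse)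
lemma Theta_sign: "\<Theta> ((-1) ^ e * x) z = (-1) ^ e * \<Theta> x z"
  by (induction e) (simp_all add: Theta_neg)
lemma Theta_sum: "\<Theta> (sum h S) z = (\<Sum>j\<in>S. \<Theta> (h j) z)"
  by (induction S rule: infinite_finite_induct) (simp_all add: Theta_zero Theta_add)
lemma Theta_diff_sign: "\<Theta> (x - (-1) ^ e * y) z = \<Theta> x z - (-1) ^ e * \<Theta> y z"
proof -
  have "x - (-1) ^ e * y = x + (-1) ^ Suc e * y" by simp
  then show ?thesis by (simp only: Theta_add Theta_sign) simp
qed
lemma Theta_signed_sum: "\<Theta> (\<Sum>j\<in>S. (-1) ^ h j * X j) z = (\<Sum>j\<in>S. (-1) ^ h j * \<Theta> (X j) z)"
  by (simp add: Theta_sum Theta_sign)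

lemma Theta_sym: "\<Theta> x y = \<Theta> y x"
proof -
  have "\<Theta> x y = \<Theta> 1 (x * y)" using Theta_bimodule[of 1 1 x y] by simp
  moreover have "\<Theta> y x = \<Theta> 1 (x * y)" using Theta_bimodule[of y 1 1 x] by simp
  ultimately show ?thesis by simp
qed
lemma Theta_mult_left: "\<Theta> (a * x) y = \<Theta> x (y * a)" using Theta_bimodule[of a x 1 y] by simp
lemma Theta_mult_right: "\<Theta> (x * b) y = \<Theta> x (b * y)" using Theta_bimodule[of 1 x b y] by simp

lemma Theta_eqI: "(\<And>a. \<Theta> x a = \<Theta> y a) \<Longrightarrow> x = y"
  using Theta_inj by (metis ext injD)

lemma Theta_the_inv: "linform sm \<phi> \<Longrightarrow> \<Theta> (the_inv_into UNIV \<Theta> \<phi>) = \<phi>"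
  by (metis Theta_bij bij_betw_def f_the_inv_into_f mem_Collect_eq)
lemma the_inv_Theta: "the_inv_into UNIV \<Theta> (\<Theta> x) = x"
  using Theta_inj by (simp add: the_inv_into_f_f)

lemma cochain_linform_first: "cochain sm n f \<Longrightarrow> linform sm (\<lambda>a. f (a # ys))"
proof -
  assume f: "cochain sm n f"
  show ?thesis
  proof (cases "length ys = n")
    case True
    have "f (a # ys) = f ((x # ys)[0 := a])" for a x by simp
    then show ?thesis unfolding linform_def
      using cochain_lin[OF f, of "x # ys" 0 for x] True by (metis length_Cons zero_le list_update_code(2))
  next
    case False
    then show ?thesis using cochain_zero[OF f] unfolding linform_def by simp
  qed
qed

lemma Theta_to_hoch: "cochain sm n f \<Longrightarrow> \<Theta> (to_hoch \<Theta> f ys) = (\<lambda>a. f (a # ys))"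
  unfolding to_hoch_def by (rule Theta_the_inv[OF cochain_linform_first])

lemma cochain_eq_Theta_to_hoch: "cochain sm n f \<Longrightarrow> f (a # L) = \<Theta> (to_hoch \<Theta> f L) a"
  using Theta_to_hoch by metis

lemma to_hoch_eq_0: "cochain sm n f \<Longrightarrow> length ys \<noteq> n \<Longrightarrow> to_hoch \<Theta> f ys = 0"
  by (rule Theta_eqI) (simp add: Theta_to_hoch Theta_zero cochain_zero)

lemma hoch_cochain_to_hoch:
  assumes f: "cochain sm n f"
  shows "hoch_cochain n (to_hoch \<Theta> f)"
  unfolding hoch_cochain_def
proof (intro conjI allI impI)
  fix ys :: "'a list" assume "length ys \<noteq> n" then show "to_hoch \<Theta> f ys = 0" by (rule to_hoch_eq_0[OF f])
next
  fix us ws :: "'a list" assume len: "length us + length ws + 1 = n"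
  have i: "Suc (length us) \<le> n" using len by simp
  have l: "length (a # us @ v # ws) = Suc n" for a v using len by simp
  show "k_linear (\<lambda>v. to_hoch \<Theta> f (us @ v # ws))"
    unfolding k_linear_def
  proof (intro conjI allI)
    fix x y
    show "to_hoch \<Theta> f (us @ (x + y) # ws) = to_hoch \<Theta> f (us @ x # ws) + to_hoch \<Theta> f (us @ y # ws)"
    proof (rule Theta_eqI)
      fix a
      show "\<Theta> (to_hoch \<Theta> f (us @ (x + y) # ws)) a = \<Theta> (to_hoch \<Theta> f (us @ x # ws) + to_hoch \<Theta> f (us @ y # ws)) a"
        unfolding Theta_add Theta_to_hoch[OF f]
        using cochain_lin(1)[OF f l[of a 0] i, of x y] unfolding list_update_Cons_middle .
    qed
  next
    fix c x
    show "to_hoch \<Theta> f (us @ sm c x # ws) = sm c (to_hoch \<Theta> f (us @ x # ws))"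
    proof (rule Theta_eqI)
      fix a
      show "\<Theta> (to_hoch \<Theta> f (us @ sm c x # ws)) a = \<Theta> (sm c (to_hoch \<Theta> f (us @ x # ws))) a"
        unfolding Theta_sm Theta_to_hoch[OF f]
        using cochain_lin(2)[OF f l[of a 0] i, of c x] unfolding list_update_Cons_middle .
    qed
  qed
qed

definition of_hoch :: "nat \<Rightarrow> ('a list \<Rightarrow> 'a) \<Rightarrow> 'a list \<Rightarrow> 'k" where
  "of_hoch N X xs = (if length xs = Suc N then \<Theta> (X (tl xs)) (hd xs) else 0)"

lemma of_hoch_Cons: "length L = N \<Longrightarrow> of_hoch N X (a # L) = \<Theta> (X L) a"
  unfolding of_hoch_def by simp

lemma cochain_eq_of_hoch: "cochain sm n f \<Longrightarrow> f = of_hoch n (to_hoch \<Theta> f)"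
proof
  fix xs assume f: "cochain sm n f"
  show "f xs = of_hoch n (to_hoch \<Theta> f) xs"
  proof (cases xs)
    case Nil then show ?thesis using cochain_zero[OF f] by (simp add: of_hoch_def)
  next
    case (Cons a L)
    then show ?thesis using cochain_zero[OF f] cochain_eq_Theta_to_hoch[OF f] to_hoch_eq_0[OF f] by (simp add: of_hoch_def Theta_zero)
  qed
qed

lemma to_hoch_of_hoch: "hoch_cochain N X \<Longrightarrow> to_hoch \<Theta> (of_hoch N X) = X"
proof
  fix ys assume X: "hoch_cochain N X"
  show "to_hoch \<Theta> (of_hoch N X) ys = X ys"
  proof (cases "length ys = N")
    case True
    then have "(\<lambda>a. of_hoch N X (a # ys)) = \<Theta> (X ys)" by (auto simp: of_hoch_def)
    then show ?thesis unfolding to_hoch_def by (simp add: the_inv_Theta)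
  next
    case False
    then have "(\<lambda>a. of_hoch N X (a # ys)) = \<Theta> 0" by (auto simp: of_hoch_def Theta_zero_fun)
    then show ?thesis unfolding to_hoch_def using hoch_cochain_zero[OF X False] by (simp add: the_inv_Theta)
  qed
qed

lemma of_hoch_update:
  assumes X: "hoch_cochain N X" and len: "length xs = Suc N" and i: "i \<le> N"
  shows "of_hoch N X (xs[i := x + y]) = of_hoch N X (xs[i := x]) + of_hoch N X (xs[i := y])"
    and "of_hoch N X (xs[i := sm c x]) = c * of_hoch N X (xs[i := x])"
proof -
  from len obtain b L where xs: "xs = b # L" and L: "length L = N" by (cases xs) auto
  have "of_hoch N X (xs[i := x + y]) = of_hoch N X (xs[i := x]) + of_hoch N X (xs[i := y]) \<and>
      of_hoch N X (xs[i := sm c x]) = c * of_hoch N X (xs[i := x])"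
  proof (cases i)
    case 0
    then show ?thesis unfolding xs using L by (simp add: of_hoch_Cons Theta_add_right Theta_sm_right)
  next
    case (Suc j)
    then have j: "j < N" using i by simp
    have u: "L[j := v] = take j L @ v # drop (Suc j) L" for v using j L by (simp add: upd_conv_take_nth_drop)
    have k: "k_linear (\<lambda>v. X (take j L @ v # drop (Suc j) L))" by (rule hoch_cochain_linear[OF X]) (use j L in simp)
    have ln: "length (take j L @ v # drop (Suc j) L) = N" for v using j L by simp
    show ?thesis unfolding xs Suc using L
      by (simp add: of_hoch_Cons[OF ln] u k_linear_add[OF k] k_linear_sm[OF k] Theta_add Theta_sm)
  qed
  then show "of_hoch N X (xs[i := x + y]) = of_hoch N X (xs[i := x]) + of_hoch N X (xs[i := y])"
    and "of_hoch N X (xs[i := sm c x]) = c * of_hoch N X (xs[i := x])" by blast+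
qed

lemma cochain_of_hoch: "hoch_cochain N X \<Longrightarrow> cochain sm N (of_hoch N X)"
  unfolding cochain_def using of_hoch_update by (auto simp: of_hoch_def)

lemma cbr_eq_of_hoch:
  assumes f: "cochain sm n f" and g: "cochain sm m g"
  shows "cbr \<Theta> n m f g = of_hoch (n + m - 1) (gbracket n m (to_hoch \<Theta> f) (to_hoch \<Theta> g))"
proof (rule ext)
  fix xs :: "'a list"
  show "cbr \<Theta> n m f g xs = of_hoch (n + m - 1) (gbracket n m (to_hoch \<Theta> f) (to_hoch \<Theta> g)) xs"
  proof (cases "length xs = n + m \<and> xs \<noteq> []")
    case True
    then obtain a L where xs: "xs = a # L" and L: "length L = n + m - 1" by (cases xs) auto
    have r: "of_hoch (n + m - 1) (gbracket n m (to_hoch \<Theta> f) (to_hoch \<Theta> g)) (a # L) =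
       (\<Sum>i<n. (-1) ^ (i * (m + 1)) * \<Theta> (to_hoch \<Theta> f (plug i (to_hoch \<Theta> g) m L)) a)
       - (-1) ^ ((n + 1) * (m + 1)) * (\<Sum>j<m. (-1) ^ (j * (n + 1)) * \<Theta> (to_hoch \<Theta> g (plug j (to_hoch \<Theta> f) n L)) a)"
      unfolding of_hoch_Cons[OF L] gbracket_def Theta_diff_sign gcomp_def Theta_signed_sum ..
    show ?thesis unfolding xs r unfolding cbr_def using True unfolding xs
      by (simp add: cochain_eq_Theta_to_hoch[OF f] cochain_eq_Theta_to_hoch[OF g] plug_def)
  next
    case False
    show ?thesis
    proof (cases "length xs = Suc (n + m - 1)")
      case True
      with False have nm: "n = 0" "m = 0" by auto
      show ?thesis using False unfolding cbr_def of_hoch_def nm by (simp add: gbracket_def gcomp_def Theta_zero)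
    next
      case f2: False
      then show ?thesis using False unfolding cbr_def of_hoch_def by auto
    qed
  qed
qed

lemma cochain_cbr:
  assumes "cochain sm n f" "cochain sm m g"
  shows "cochain sm (n + m - 1) (cbr \<Theta> n m f g)"
  unfolding cbr_eq_of_hoch[OF assms]
  by (intro cochain_of_hoch hoch_cochain_gbracket hoch_cochain_to_hoch assms)

lemma of_hoch_sign: "of_hoch N (\<lambda>ys. (-1) ^ e * X ys) xs = (-1) ^ e * of_hoch N X xs"
  unfolding of_hoch_def by (simp add: Theta_sign)

lemma of_hoch_add: "of_hoch N X xs + of_hoch N Y xs = of_hoch N (\<lambda>ys. X ys + Y ys) xs"
  unfolding of_hoch_def by (simp add: Theta_add)

lemma of_hoch_eq_0: "(\<And>ys. length ys = N \<Longrightarrow> X ys = 0) \<Longrightarrow> of_hoch N X xs = 0"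
  unfolding of_hoch_def by (simp add: Theta_zero)

lemma of_hoch_zero: "of_hoch N (\<lambda>_. 0) = (\<lambda>_. 0)"
  unfolding of_hoch_def by (auto simp: Theta_zero)

lemma of_hoch_cong: "(\<And>ys. length ys = N \<Longrightarrow> X ys = Y ys) \<Longrightarrow> of_hoch N X = of_hoch N Y"
  unfolding of_hoch_def by (intro ext) auto

lemma to_hoch_zero_fun: "to_hoch \<Theta> (\<lambda>_. 0) = (\<lambda>_. 0)"
  unfolding to_hoch_def by (simp add: Theta_zero_fun[symmetric] the_inv_Theta)

lemma hoch_d_of_hoch_Cons:
  assumes ly: "length ys = Suc n"
  shows "hoch_d n (of_hoch n F) (a # ys) = \<Theta> (ys ! 0 * F (tl ys)) a
    + (\<Sum>i<n. (-1) ^ Suc i * \<Theta> (F (plug i \<mu> 2 ys)) a) + (-1) ^ (n + 1) * \<Theta> (F (take n ys) * ys ! n) a"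
proof -
  let ?xs = "a # ys"
  have "of_hoch n F (take 0 ?xs @ [?xs ! 0 * ?xs ! Suc 0] @ drop (0 + 2) ?xs) = \<Theta> (ys ! 0 * F (tl ys)) a"
  proof -
    have "take 0 ?xs @ [?xs ! 0 * ?xs ! Suc 0] @ drop (0 + 2) ?xs = (a * ys ! 0) # tl ys"
      using ly by (cases ys) auto
    then show ?thesis using ly by (simp add: of_hoch_Cons Theta_mult_left)
  qed
  moreover have "of_hoch n F (take (Suc i) ?xs @ [?xs ! Suc i * ?xs ! Suc (Suc i)] @ drop (Suc i + 2) ?xs)
      = \<Theta> (F (plug i \<mu> 2 ys)) a" if i: "i < n" for i
  proof -
    have "take (Suc i) ?xs @ [?xs ! Suc i * ?xs ! Suc (Suc i)] @ drop (Suc i + 2) ?xs = a # plug i \<mu> 2 ys"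
      using plug_mu[of i ys] ly i by simp
    moreover have "length (plug i \<mu> 2 ys) = n" using ly i by (simp add: length_plug)
    ultimately show ?thesis by (simp add: of_hoch_Cons)
  qed
  moreover have "of_hoch n F ((?xs ! (n + 1) * ?xs ! 0) # take n (drop 1 ?xs)) = \<Theta> (F (take n ys) * ys ! n) a"
    using ly by (simp add: of_hoch_Cons Theta_mult_right)
  ultimately show ?thesis
    unfolding hoch_d_def using ly by (simp add: sum.atMost_shift)
qed

lemma hoch_d_of_hoch:
  "hoch_d n (of_hoch n F) = of_hoch (Suc n) (\<lambda>ys. (-1) ^ (n + 1) * gbracket 2 n \<mu> F ys)"
proof (rule ext)
  fix xs :: "'a list"
  show "hoch_d n (of_hoch n F) xs = of_hoch (Suc n) (\<lambda>ys. (-1) ^ (n + 1) * gbracket 2 n \<mu> F ys) xs"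
  proof (cases "length xs = n + 2")
    case False
    then show ?thesis unfolding hoch_d_def of_hoch_def by simp
  next
    case True
    then obtain a ys where xs: "xs = a # ys" and ly: "length ys = Suc n" by (cases xs) auto
    define s where "s = (-1::'k) ^ (n + 1)"
    define S where "S = (\<Sum>i<n. (-1) ^ i * \<Theta> (F (plug i \<mu> 2 ys)) a)"
    have ss: "s * s = 1" "s * (s * x) = x" for x
      unfolding s_def mult.assoc[symmetric] neg_one_power_square by simp_all
    have "hoch_d n (of_hoch n F) (a # ys) = \<Theta> (ys ! 0 * F (tl ys)) a - S + s * \<Theta> (F (take n ys) * ys ! n) a"
      unfolding hoch_d_of_hoch_Cons[OF ly] S_def s_def by (simp add: sum_negf[symmetric])
    moreover have "\<Theta> (gcomp 2 n \<mu> F ys) a = \<Theta> (F (take n ys) * ys ! n) a + s * \<Theta> (ys ! 0 * F (tl ys)) a"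
      unfolding gcomp_two_mu[OF ly] Theta_add s_def Theta_sign ..
    moreover have "\<Theta> (gcomp n 2 F \<mu> ys) a = S"
    proof -
      have "(-1::'k) ^ (i * (2 + 1)) = (-1) ^ i" for i by (rule neg_one_power_eq_if_even) simp
      then show ?thesis unfolding gcomp_def Theta_signed_sum S_def by simp
    qed
    moreover have "(-1::'k) ^ ((2 + 1) * (n + 1)) = s"
      unfolding s_def by (rule neg_one_power_eq_if_even) simp
    ultimately show ?thesis
      unfolding xs of_hoch_Cons[OF ly] Theta_sign gbracket_def Theta_diff_sign s_def[symmetric]
      by (simp add: algebra_simps ss)
  qed
qed

lemma hoch_d_eq_of_hoch:
  assumes "cochain sm k u"
  shows "hoch_d k u = of_hoch (Suc k) (\<lambda>ys. (-1) ^ (k + 1) * gbracket 2 k \<mu> (to_hoch \<Theta> u) ys)"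
proof -
  have "hoch_d k u = hoch_d k (of_hoch k (to_hoch \<Theta> u))"
    using cochain_eq_of_hoch[OF assms] by (rule arg_cong)
  also have "\<dots> = of_hoch (Suc k) (\<lambda>ys. (-1) ^ (k + 1) * gbracket 2 k \<mu> (to_hoch \<Theta> u) ys)"
    by (rule hoch_d_of_hoch)
  finally show ?thesis .
qed

lemma gbracket_mu_cocycle:
  assumes f: "cyc_cocycle sm n f"
  shows "gbracket 2 n \<mu> (to_hoch \<Theta> f) = (\<lambda>_. 0)"
proof (rule ext)
  fix ys :: "'a list"
  have fc: "cochain sm n f" by (rule cyc_cocycle_cochain[OF f])
  show "gbracket 2 n \<mu> (to_hoch \<Theta> f) ys = 0"
  proof (cases "length ys = Suc n")
    case True
    have "hoch_d n f (a # ys) = 0" for a using f unfolding cyc_cocycle_def by blast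
    then have "\<Theta> ((-1) ^ (n + 1) * gbracket 2 n \<mu> (to_hoch \<Theta> f) ys) a = \<Theta> 0 a" for a
      unfolding hoch_d_eq_of_hoch[OF fc] of_hoch_Cons[OF True] Theta_zero .
    then have "(-1) ^ (n + 1) * gbracket 2 n \<mu> (to_hoch \<Theta> f) ys = 0" by (rule Theta_eqI)
    then show ?thesis by (rule neg_one_power_mult_eq_0D)
  next
    case False
    have "hoch_cochain (2 + n - 1) (gbracket 2 n \<mu> (to_hoch \<Theta> f))"
      by (intro hoch_cochain_gbracket hoch_cochain_mu hoch_cochain_to_hoch fc)
    then show ?thesis using False hoch_cochain_zero by fastforce
  qed
qed

end

section \<open>The bracket of cyclic cochains\<close>

definition plug_term :: "('a list \<Rightarrow> 'k) \<Rightarrow> ('a list \<Rightarrow> 'a) \<Rightarrow> nat \<Rightarrow> nat \<Rightarrow> 'a list \<Rightarrow> 'k" where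
  "plug_term f G m i xs = f (hd xs # plug i G m (tl xs))"

context symm_frob begin

lemma cbr_plug_term: "cbr \<Theta> n m f g xs = (if length xs = n + m \<and> xs \<noteq> [] then
    (\<Sum>i<n. (-1) ^ (i * (m + 1)) * plug_term f (to_hoch \<Theta> g) m i xs)
    - (-1) ^ ((n + 1) * (m + 1)) * (\<Sum>j<m. (-1) ^ (j * (n + 1)) * plug_term g (to_hoch \<Theta> f) n j xs) else 0)"
  unfolding cbr_def plug_term_def plug_def by simp

lemma cbr_antisym: "cbr \<Theta> m n g f xs = - ((-1) ^ ((n + 1) * (m + 1)) * cbr \<Theta> n m f g xs)"
proof -
  have s': "(-1::'k) ^ ((m + 1) * (n + 1)) = (-1) ^ ((n + 1) * (m + 1))" by (simp add: mult.commute)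
  have l: "(length xs = m + n) = (length xs = n + m)" by (simp add: add.commute)
  show ?thesis
  proof (cases "length xs = n + m \<and> xs \<noteq> []")
    case True
    show ?thesis unfolding cbr_def s' l if_P[OF True] by (rule diff_scaled_antisym[OF neg_one_power_square])
  next
    case False
    show ?thesis unfolding cbr_def s' l if_not_P[OF False] by simp
  qed
qed

lemma cochain_to_hoch_swap:
  assumes f: "cochain sm n f" and g: "cochain sm m g"
  shows "f (to_hoch \<Theta> g K # L) = g (to_hoch \<Theta> f L # K)"
  unfolding cochain_eq_Theta_to_hoch[OF f] cochain_eq_Theta_to_hoch[OF g] by (rule Theta_sym)

lemma plug_term_rotate:
  assumes f: "cyclic_cochain sm n f" and len: "length us = n + m - 1" and i: "1 \<le> i" "i < n"
  shows "plug_term f G m i (z # us) = (-1) ^ n * plug_term f G m (i - 1) (us @ [z])"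
proof -
  obtain u us' where us: "us = u # us'" using len i by (cases us) auto
  obtain i' where i': "i = Suc i'" using i by (cases i) auto
  have "plug i' G m us' @ [z] = plug i' G m (us' @ [z])"
    by (rule plug_append) (use len i us i' in simp)
  then show ?thesis unfolding plug_term_def us i' using cyclic_cochain_rotate[OF f]
    by (simp add: plug_Cons_Suc)
qed

lemma plug_term_rotate_first:
  assumes f: "cyclic_cochain sm n f" and g: "cyclic_cochain sm m g"
    and len: "length us = n + m - 1" and nm: "1 \<le> n" "1 \<le> m"
  shows "plug_term f (to_hoch \<Theta> g) m 0 (z # us) = (-1) ^ (n + m) * plug_term g (to_hoch \<Theta> f) n (m - 1) (us @ [z])"
proof -
  obtain u us' where us: "us = u # us'" using len nm by (cases us) auto
  have l': "length us' = n + m - 2" using len us by simp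
  have e1: "take (m - 1) (us' @ [z]) = take (m - 1) us'" using l' nm by simp
  have e2: "take n (drop (m - 1) (us' @ [z])) = drop (m - 1) us' @ [z]" using l' nm by simp
  have e3: "drop (m - 1 + n) (us' @ [z]) = []" using l' nm by simp
  have e4: "u # take (m - 1) us' = take m us" using us nm by (cases m) auto
  have e5: "drop (m - 1) us' = drop m us" using us nm by (cases m) auto
  have "plug_term g (to_hoch \<Theta> f) n (m - 1) (us @ [z]) = g (u # plug (m - 1) (to_hoch \<Theta> f) n (us' @ [z]))"
    unfolding plug_term_def us by simp
  also have "plug (m - 1) (to_hoch \<Theta> f) n (us' @ [z]) = take (m - 1) us' @ [to_hoch \<Theta> f (drop (m - 1) us' @ [z])]"
    unfolding plug_def e1 e2 e3 by simp
  also have "u # take (m - 1) us' @ [to_hoch \<Theta> f (drop (m - 1) us' @ [z])] = take m us @ [to_hoch \<Theta> f (drop m us @ [z])]"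
    unfolding e5 append_Cons[symmetric] e4 ..
  finally have "plug_term g (to_hoch \<Theta> f) n (m - 1) (us @ [z]) = g (take m us @ [to_hoch \<Theta> f (drop m us @ [z])])" .
  moreover have "plug_term f (to_hoch \<Theta> g) m 0 (z # us) = (-1) ^ n * ((-1) ^ m * g (take m us @ [to_hoch \<Theta> f (drop m us @ [z])]))"
  proof -
    have "plug_term f (to_hoch \<Theta> g) m 0 (z # us) = f (z # to_hoch \<Theta> g (take m us) # drop m us)"
      unfolding plug_term_def plug_def by simp
    also have "\<dots> = (-1) ^ n * f (to_hoch \<Theta> g (take m us) # drop m us @ [z])"
      using cyclic_cochain_rotate[OF f, of z "to_hoch \<Theta> g (take m us) # drop m us"] by simp
    also have "f (to_hoch \<Theta> g (take m us) # drop m us @ [z]) = g (to_hoch \<Theta> f (drop m us @ [z]) # take m us)"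
      by (rule cochain_to_hoch_swap[OF cyclic_cochain_cochain[OF f] cyclic_cochain_cochain[OF g]])
    also have "\<dots> = (-1) ^ m * g (take m us @ [to_hoch \<Theta> f (drop m us @ [z])])" by (rule cyclic_cochain_rotate[OF g])
    finally show ?thesis .
  qed
  ultimately show ?thesis by (simp add: power_add mult.assoc)
qed

lemma plug_term_rotate_first_0:
  assumes f: "cyclic_cochain sm n f" and len: "length us = n - 1" and n: "1 \<le> n"
  shows "plug_term f G 0 0 (z # us) = plug_term f G 0 (n - 1) (us @ [z])"
proof -
  have "plug_term f G 0 0 (z # us) = f (z # G [] # us)" unfolding plug_term_def plug_def by simp
  also have "\<dots> = (-1) ^ n * f (G [] # us @ [z])" using cyclic_cochain_rotate[OF f, of z "G [] # us"] by simp
  also have "f (G [] # us @ [z]) = (-1) ^ n * f ((us @ [z]) @ [G []])" by (rule cyclic_cochain_rotate[OF f])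
  finally have A: "plug_term f G 0 0 (z # us) = f ((us @ [z]) @ [G []])" by (simp add: mult.assoc[symmetric] neg_one_power_square)
  have "plug_term f G 0 (n - 1) (us @ [z]) = f ((us @ [z]) @ [G []])"
  proof (cases us)
    case Nil
    then show ?thesis using len n unfolding plug_term_def plug_def by simp
  next
    case (Cons u us')
    then show ?thesis using len n unfolding plug_term_def plug_def by simp
  qed
  then show ?thesis using A by simp
qed

lemma plug_term_sum_rotate:
  assumes f: "cyclic_cochain sm n f" and len: "length us = n + m - 1" and n: "1 \<le> n"
  shows "(\<Sum>i<n. (-1) ^ (i * (m + 1)) * plug_term f G m i (z # us)) =
    plug_term f G m 0 (z # us) + (-1) ^ (n + m - 1) * (\<Sum>i<n. (-1) ^ (i * (m + 1)) * plug_term f G m i (us @ [z]))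
    - (-1) ^ (n + m - 1) * ((-1) ^ ((n - 1) * (m + 1)) * plug_term f G m (n - 1) (us @ [z]))"
proof -
  obtain n' where n': "n = Suc n'" using n by (cases n) auto
  have "(\<Sum>i<n. (-1) ^ (i * (m + 1)) * plug_term f G m i (z # us)) =
      plug_term f G m 0 (z # us) + (\<Sum>k<n'. (-1) ^ (Suc k * (m + 1)) * plug_term f G m (Suc k) (z # us))"
    unfolding n' using sum_lessThan_add[of "\<lambda>i. (-1) ^ (i * (m + 1)) * plug_term f G m i (z # us)" 1 n'] by simp
  also have "(\<Sum>k<n'. (-1) ^ (Suc k * (m + 1)) * plug_term f G m (Suc k) (z # us)) =
      (\<Sum>k<n'. (-1) ^ (n + m - 1) * ((-1) ^ (k * (m + 1)) * plug_term f G m k (us @ [z])))"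
  proof (rule sum.cong[OF refl])
    fix k assume k: "k \<in> {..<n'}"
    have r: "plug_term f G m (Suc k) (z # us) = (-1) ^ n * plug_term f G m k (us @ [z])"
      using plug_term_rotate[OF f len, of "Suc k" G z] k n' by simp
    have s: "(-1::'k) ^ (Suc k * (m + 1)) * (-1) ^ n = (-1) ^ (n + m - 1) * (-1) ^ (k * (m + 1))"
      unfolding power_add[symmetric] by (rule neg_one_power_eq_if_even) (auto simp: n' even_add even_mult_iff)
    show "(-1) ^ (Suc k * (m + 1)) * plug_term f G m (Suc k) (z # us) = (-1) ^ (n + m - 1) * ((-1) ^ (k * (m + 1)) * plug_term f G m k (us @ [z]))"
      unfolding r using s by (simp add: mult.assoc[symmetric])
  qed
  also have "(\<Sum>i<n. (-1) ^ (i * (m + 1)) * plug_term f G m i (us @ [z])) =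
      (\<Sum>k<n'. (-1) ^ (k * (m + 1)) * plug_term f G m k (us @ [z])) + (-1) ^ ((n - 1) * (m + 1)) * plug_term f G m (n - 1) (us @ [z])"
    unfolding n' by simp
  ultimately show ?thesis by (simp add: sum_distrib_left algebra_simps)
qed

lemma cbr_rotate_degree_0:
  assumes f: "cyclic_cochain sm n f" and len: "length us = n - 1" and n: "1 \<le> n"
  shows "cbr \<Theta> n 0 f g (z # us) = (-1) ^ (n - 1) * cbr \<Theta> n 0 f g (us @ [z])"
proof -
  define S where "S xs = (\<Sum>i<n. (-1) ^ (i * (0 + 1)) * plug_term f (to_hoch \<Theta> g) 0 i xs)" for xs
  have len': "length us = n + 0 - 1" using len by simp
  have "length (z # us) = n" "length (us @ [z]) = n" using len n by auto
  then have cbr: "cbr \<Theta> n 0 f g (z # us) = S (z # us)" "cbr \<Theta> n 0 f g (us @ [z]) = S (us @ [z])"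
    unfolding cbr_plug_term S_def by auto
  have "(-1::'k) ^ (n - 1) * ((-1) ^ (n - 1) * x) = x" for x
    by (simp add: mult.assoc[symmetric] neg_one_power_square)
  then show ?thesis
    unfolding cbr S_def plug_term_sum_rotate[OF f len' n] plug_term_rotate_first_0[OF f len n]
    by simp
qed

lemma cbr_rotate_pos:
  assumes f: "cyclic_cochain sm n f" and g: "cyclic_cochain sm m g" and len: "length us = n + m - 1"
    and n: "1 \<le> n" and m: "1 \<le> m"
  shows "cbr \<Theta> n m f g (z # us) = (-1) ^ (n + m - 1) * cbr \<Theta> n m f g (us @ [z])"
proof -
  define F where "F = to_hoch \<Theta> f"
  define G where "G = to_hoch \<Theta> g"
  define E where "E = ((-1)::'k) ^ (n + m - 1)"
  define \<sigma> where "\<sigma> = ((-1)::'k) ^ ((n + 1) * (m + 1))"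
  define SA where "SA xs = (\<Sum>i<n. (-1) ^ (i * (m + 1)) * plug_term f G m i xs)" for xs
  define SB where "SB xs = (\<Sum>j<m. (-1) ^ (j * (n + 1)) * plug_term g F n j xs)" for xs
  define a where "a = plug_term f G m (n - 1) (us @ [z])"
  define b where "b = plug_term g F n (m - 1) (us @ [z])"
  have len': "length us = m + n - 1" using len by (simp add: add.commute)
  have "length (z # us) = n + m" "length (us @ [z]) = n + m" using len n by auto
  then have cbr: "cbr \<Theta> n m f g (z # us) = SA (z # us) - \<sigma> * SB (z # us)"
      "cbr \<Theta> n m f g (us @ [z]) = SA (us @ [z]) - \<sigma> * SB (us @ [z])"
    unfolding cbr_plug_term SA_def SB_def \<sigma>_def F_def G_def by auto
  have A: "SA (z # us) = (-1) ^ (n + m) * b + E * SA (us @ [z]) - E * ((-1) ^ ((n - 1) * (m + 1)) * a)"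
    unfolding SA_def E_def a_def b_def plug_term_sum_rotate[OF f len n] G_def F_def
      plug_term_rotate_first[OF f g len n m] ..
  have B: "SB (z # us) = (-1) ^ (m + n) * a + E * SB (us @ [z]) - E * ((-1) ^ ((m - 1) * (n + 1)) * b)"
    using plug_term_sum_rotate[OF g len' m, of F z] plug_term_rotate_first[OF g f len' m n, of z]
    unfolding SB_def E_def a_def b_def G_def F_def by (simp add: add.commute)
  obtain n' m' where nm: "n = Suc n'" "m = Suc m'" using n m by (cases n; cases m) auto
  have c1: "\<sigma> * E * (-1) ^ ((m - 1) * (n + 1)) = - ((-1) ^ (n + m))"
  proof -
    have "\<sigma> * E * (-1) ^ ((m - 1) * (n + 1)) = (-1) ^ (Suc (n + m))"
      unfolding \<sigma>_def E_def power_add[symmetric]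
      by (rule neg_one_power_eq_if_even) (auto simp: nm even_add even_mult_iff)
    then show ?thesis by simp
  qed
  have c2: "E * (-1) ^ ((n - 1) * (m + 1)) = - (\<sigma> * (-1) ^ (m + n))"
  proof -
    have "E * (-1) ^ ((n - 1) * (m + 1)) = (-1) ^ (Suc ((n + 1) * (m + 1) + (m + n)))"
      unfolding E_def power_add[symmetric]
      by (rule neg_one_power_eq_if_even) (auto simp: nm even_add even_mult_iff)
    then show ?thesis unfolding \<sigma>_def by (simp add: power_add)
  qed
  have "SA (z # us) - \<sigma> * SB (z # us) = E * (SA (us @ [z]) - \<sigma> * SB (us @ [z]))
      + b * ((-1) ^ (n + m) + \<sigma> * E * (-1) ^ ((m - 1) * (n + 1)))
      - a * (E * (-1) ^ ((n - 1) * (m + 1)) + \<sigma> * (-1) ^ (m + n))"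
    unfolding A B by (simp add: algebra_simps)
  also have "\<dots> = E * (SA (us @ [z]) - \<sigma> * SB (us @ [z]))" unfolding c1 c2 by simp
  finally have "SA (z # us) - \<sigma> * SB (z # us) = E * (SA (us @ [z]) - \<sigma> * SB (us @ [z]))" .
  then show ?thesis unfolding cbr E_def .
qed

lemma cbr_rotate:
  assumes f: "cyclic_cochain sm n f" and g: "cyclic_cochain sm m g" and len: "length us = n + m - 1"
  shows "cbr \<Theta> n m f g (z # us) = (-1) ^ (n + m - 1) * cbr \<Theta> n m f g (us @ [z])"
proof -
  consider "n + m = 0" | "m = 0" "1 \<le> n" | "n = 0" "1 \<le> m" | "1 \<le> n" "1 \<le> m" by linarith
  then show ?thesis
  proof cases
    case 1
    then show ?thesis by (simp add: cbr_plug_term)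
  next
    case 2
    then show ?thesis using cbr_rotate_degree_0[OF f _ 2(2), of us g z] len by simp
  next
    case 3
    then have "cbr \<Theta> 0 m f g xs = - ((-1) ^ (m + 1) * cbr \<Theta> m 0 g f xs)" for xs
      using cbr_antisym[of m 0 g f xs] by simp
    then show ?thesis using cbr_rotate_degree_0[OF g _ 3(2), of us f z] len 3 by simp
  next
    case 4
    then show ?thesis by (rule cbr_rotate_pos[OF f g len])
  qed
qed

lemma cbr_cyclic:
  assumes f: "cyclic_cochain sm n f" and g: "cyclic_cochain sm m g"
  shows "cyclic_cochain sm (n + m - 1) (cbr \<Theta> n m f g)"
  unfolding cyclic_cochain_def
proof (intro conjI allI impI)
  show "cochain sm (n + m - 1) (cbr \<Theta> n m f g)"
    by (intro cochain_cbr cyclic_cochain_cochain f g)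
next
  fix xs :: "'a list" assume l: "length xs = Suc (n + m - 1)"
  then have ne: "xs \<noteq> []" by auto
  have l2: "length (butlast xs) = n + m - 1" using l by simp
  show "cbr \<Theta> n m f g (last xs # butlast xs) = (-1) ^ (n + m - 1) * cbr \<Theta> n m f g xs"
    using cbr_rotate[OF f g l2, of "last xs"] append_butlast_last_id[OF ne] by simp
qed

lemma to_hoch_add:
  assumes f: "cochain sm n f" and f': "cochain sm n f'"
  shows "to_hoch \<Theta> (\<lambda>xs. f xs + f' xs) = (\<lambda>ys. to_hoch \<Theta> f ys + to_hoch \<Theta> f' ys)"
proof (rule ext)
  fix ys
  have "(\<lambda>a. f (a # ys) + f' (a # ys)) = \<Theta> (to_hoch \<Theta> f ys + to_hoch \<Theta> f' ys)"
    by (rule ext) (simp add: Theta_add cochain_eq_Theta_to_hoch[OF f] cochain_eq_Theta_to_hoch[OF f'])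
  then show "to_hoch \<Theta> (\<lambda>xs. f xs + f' xs) ys = to_hoch \<Theta> f ys + to_hoch \<Theta> f' ys"
    unfolding to_hoch_def by (simp add: the_inv_Theta)
qed

lemma to_hoch_scale:
  assumes f: "cochain sm n f"
  shows "to_hoch \<Theta> (\<lambda>xs. c * f xs) = (\<lambda>ys. sm c (to_hoch \<Theta> f ys))"
proof (rule ext)
  fix ys
  have "(\<lambda>a. c * f (a # ys)) = \<Theta> (sm c (to_hoch \<Theta> f ys))"
    by (rule ext) (simp add: Theta_sm cochain_eq_Theta_to_hoch[OF f])
  then show "to_hoch \<Theta> (\<lambda>xs. c * f xs) ys = sm c (to_hoch \<Theta> f ys)"
    unfolding to_hoch_def by (simp add: the_inv_Theta)
qed

lemma plug_term_add_right: "cochain sm m g \<Longrightarrow>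
  plug_term g (\<lambda>ys. F ys + F' ys) n j xs = plug_term g F n j xs + plug_term g F' n j xs"
  unfolding plug_term_def plug_def by (rule cochain_add_slot)

lemma plug_term_scale_right: "cochain sm m g \<Longrightarrow>
  plug_term g (\<lambda>ys. sm c (F ys)) n j xs = c * plug_term g F n j xs"
  unfolding plug_term_def plug_def by (rule cochain_scale_slot)

lemma plug_term_add_left: "plug_term (\<lambda>xs. f xs + f' xs) G m i xs = plug_term f G m i xs + plug_term f' G m i xs"
  unfolding plug_term_def by simp
lemma plug_term_scale_left: "plug_term (\<lambda>xs. c * f xs) G m i xs = c * plug_term f G m i xs"
  unfolding plug_term_def by simp

lemma cbr_linear:
  assumes f: "cochain sm n f" and f': "cochain sm n f'" and g: "cochain sm m g"
  shows "cbr \<Theta> n m (\<lambda>xs. f xs + f' xs) g = (\<lambda>xs. cbr \<Theta> n m f g xs + cbr \<Theta> n m f' g xs)"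
    and "cbr \<Theta> n m (\<lambda>xs. c * f xs) g = (\<lambda>xs. c * cbr \<Theta> n m f g xs)"
    and "cbr \<Theta> m n g (\<lambda>xs. f xs + f' xs) = (\<lambda>xs. cbr \<Theta> m n g f xs + cbr \<Theta> m n g f' xs)"
    and "cbr \<Theta> m n g (\<lambda>xs. c * f xs) = (\<lambda>xs. c * cbr \<Theta> m n g f xs)"
proof -
  show "cbr \<Theta> n m (\<lambda>xs. f xs + f' xs) g = (\<lambda>xs. cbr \<Theta> n m f g xs + cbr \<Theta> n m f' g xs)"
    by (rule ext) (simp add: cbr_plug_term to_hoch_add[OF f f'] plug_term_add_left plug_term_add_right[OF g] sum.distrib distrib_left right_diff_distrib)
  show "cbr \<Theta> n m (\<lambda>xs. c * f xs) g = (\<lambda>xs. c * cbr \<Theta> n m f g xs)"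
    by (rule ext) (simp add: cbr_plug_term to_hoch_scale[OF f] plug_term_scale_left plug_term_scale_right[OF g] sum_distrib_left right_diff_distrib mult.left_commute)
  show "cbr \<Theta> m n g (\<lambda>xs. f xs + f' xs) = (\<lambda>xs. cbr \<Theta> m n g f xs + cbr \<Theta> m n g f' xs)"
    by (rule ext) (simp add: cbr_plug_term to_hoch_add[OF f f'] plug_term_add_left plug_term_add_right[OF g] sum.distrib distrib_left right_diff_distrib)
  show "cbr \<Theta> m n g (\<lambda>xs. c * f xs) = (\<lambda>xs. c * cbr \<Theta> m n g f xs)"
    by (rule ext) (simp add: cbr_plug_term to_hoch_scale[OF f] plug_term_scale_left plug_term_scale_right[OF g] sum_distrib_left right_diff_distrib mult.left_commute)
qed

lemma cbr_antisym_sum: "cbr \<Theta> n m f g xs + (-1) ^ ((n + 1) * (m + 1)) * cbr \<Theta> m n g f xs = 0"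
  by (subst cbr_antisym) (simp add: mult.assoc[symmetric] neg_one_power_square)

lemma cbr_0_0: "cbr \<Theta> 0 0 f g = (\<lambda>_. 0)"
  unfolding cbr_def by auto

lemma cbr_zero_right:
  assumes f: "cochain sm n f"
  shows "cbr \<Theta> n q f (\<lambda>_. 0) = (\<lambda>_. 0)"
proof -
  have "gbracket n q (to_hoch \<Theta> f) (\<lambda>_. 0) = (\<lambda>_. 0)" by (rule ext) (rule gbracket_zero_right[OF hoch_cochain_to_hoch[OF f]])
  then show ?thesis unfolding cbr_eq_of_hoch[OF f cochain_zero_fun] to_hoch_zero_fun by (simp only: of_hoch_zero)
qed

lemma cbr_zero_left:
  assumes g: "cochain sm m g"
  shows "cbr \<Theta> n m (\<lambda>_. 0) g = (\<lambda>_. 0)"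
proof -
  have "gbracket n m (\<lambda>_. 0) (to_hoch \<Theta> g) = (\<lambda>_. 0)"
    by (rule ext) (simp add: gbracket_def gcomp_zero_right[OF hoch_cochain_to_hoch[OF g]] gcomp_zero_left)
  then show ?thesis unfolding cbr_eq_of_hoch[OF cochain_zero_fun g] to_hoch_zero_fun by (simp only: of_hoch_zero)
qed

lemma hoch_d_cbr:
  assumes f: "cochain sm n f" and g: "cochain sm m g"
  shows "hoch_d (n + m - 1) (cbr \<Theta> n m f g) =
    of_hoch (n + m) (\<lambda>ys. (-1) ^ (n + m) * gbracket 2 (n + m - 1) \<mu> (gbracket n m (to_hoch \<Theta> f) (to_hoch \<Theta> g)) ys)"
proof (cases "n + m = 0")
  case True
  then have "gbracket n m (to_hoch \<Theta> f) (to_hoch \<Theta> g) = (\<lambda>_. 0)" by (auto simp: gbracket_def gcomp_def)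
  then show ?thesis
    using True by (simp add: cbr_0_0 hoch_d_zero gbracket_zero_right[OF hoch_cochain_mu] of_hoch_zero)
next
  case False
  then have "Suc (n + m - 1) = n + m" "n + m - 1 + 1 = n + m" by auto
  then show ?thesis unfolding cbr_eq_of_hoch[OF f g] hoch_d_of_hoch by simp
qed

lemma cbr_cocycle:
  assumes f: "cyc_cocycle sm n f" and g: "cyc_cocycle sm m g"
  shows "cyc_cocycle sm (n + m - 1) (cbr \<Theta> n m f g)"
proof -
  have fcy: "cyclic_cochain sm n f" and gcy: "cyclic_cochain sm m g"
    using f g unfolding cyc_cocycle_def by auto
  note fc = cyclic_cochain_cochain[OF fcy] and gc = cyclic_cochain_cochain[OF gcy]
  note F = hoch_cochain_to_hoch[OF fc] and G = hoch_cochain_to_hoch[OF gc]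
  have "hoch_d (n + m - 1) (cbr \<Theta> n m f g) = of_hoch (n + m) (\<lambda>_. 0)"
    unfolding hoch_d_cbr[OF fc gc]
    using gbracket_mu_closed[OF F G gbracket_mu_cocycle[OF f] gbracket_mu_cocycle[OF g]] by simp
  then show ?thesis unfolding cyc_cocycle_def of_hoch_zero using cbr_cyclic[OF fcy gcy] by simp
qed

lemma cbr_hoch_d_left:
  assumes u: "cyclic_cochain sm k u" and g: "cyc_cocycle sm m g"
  shows "cbr \<Theta> (Suc k) m (hoch_d k u) g = hoch_d (k + m - 1) (\<lambda>xs. (-1) ^ (m + 1) * cbr \<Theta> k m u g xs)"
proof -
  have uc: "cochain sm k u" and gc: "cochain sm m g"
    using u g by (auto intro: cyclic_cochain_cochain cyc_cocycle_cochain)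
  define U where "U = to_hoch \<Theta> u"
  define G where "G = to_hoch \<Theta> g"
  define W where "W = gbracket k m U G"
  define D where "D ys = (-1) ^ (k + 1) * gbracket 2 k \<mu> U ys" for ys
  have U: "hoch_cochain k U" and G: "hoch_cochain m G"
    unfolding U_def G_def using uc gc by (auto intro: hoch_cochain_to_hoch)
  have "hoch_cochain (Suc k) (gbracket 2 k \<mu> U)"
    using hoch_cochain_gbracket[OF hoch_cochain_mu U] by simp
  then have D: "hoch_cochain (Suc k) D" unfolding D_def by (rule hoch_cochain_sign)
  have du: "hoch_d k u = of_hoch (Suc k) D"
    unfolding D_def U_def by (rule hoch_d_eq_of_hoch[OF uc])
  have "cbr \<Theta> (Suc k) m (hoch_d k u) g = of_hoch (k + m) (gbracket (Suc k) m D G)"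
    unfolding du cbr_eq_of_hoch[OF cochain_of_hoch[OF D] gc] to_hoch_of_hoch[OF D] G_def by simp
  also have "\<dots> = of_hoch (k + m) (\<lambda>ys. (-1) ^ (k + 1) * gbracket 2 (k + m - 1) \<mu> W ys)"
  proof (rule of_hoch_cong)
    fix ys :: "'a list" assume "length ys = k + m"
    then show "gbracket (Suc k) m D G ys = (-1) ^ (k + 1) * gbracket 2 (k + m - 1) \<mu> W ys"
      unfolding D_def gbracket_sign_left[OF G] W_def
      using gbracket_mu_bracket[OF U G gbracket_mu_cocycle[OF g, folded G_def]] by simp
  qed
  also have "\<dots> = (\<lambda>xs. (-1) ^ (m + 1) * of_hoch (k + m) (\<lambda>ys. (-1) ^ (k + m) * gbracket 2 (k + m - 1) \<mu> W ys) xs)"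
  proof (rule ext)
    fix xs
    have "(-1::'a) ^ (m + 1) * ((-1) ^ (k + m) * z) = (-1) ^ (k + 1) * z" for z
      unfolding mult.assoc[symmetric] power_add[symmetric]
      by (rule arg_cong[where f="\<lambda>t. t * z"], rule neg_one_power_eq_if_even) auto
    then show "of_hoch (k + m) (\<lambda>ys. (-1) ^ (k + 1) * gbracket 2 (k + m - 1) \<mu> W ys) xs
        = (-1) ^ (m + 1) * of_hoch (k + m) (\<lambda>ys. (-1) ^ (k + m) * gbracket 2 (k + m - 1) \<mu> W ys) xs"
      unfolding of_hoch_sign[symmetric] by simp
  qed
  also have "\<dots> = hoch_d (k + m - 1) (\<lambda>xs. (-1) ^ (m + 1) * cbr \<Theta> k m u g xs)"
    unfolding hoch_d_scale hoch_d_cbr[OF uc gc] W_def U_def G_def ..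
  finally show ?thesis .
qed

lemma cbr_coboundary_left:
  assumes f: "cyc_cocycle sm n f" "cyc_coboundary sm n f" and g: "cyc_cocycle sm m g"
  shows "cyc_coboundary sm (n + m - 1) (cbr \<Theta> n m f g)"
proof -
  from f(2) consider "\<forall>xs. f xs = 0" | k u where "n = Suc k" "cyclic_cochain sm k u" "f = hoch_d k u"
    unfolding cyc_coboundary_def by blast
  then show ?thesis
  proof cases
    case 1
    then have "f = (\<lambda>_. 0)" by auto
    then show ?thesis using cbr_zero_left[OF cyc_cocycle_cochain[OF g]] by (simp add: cyc_coboundary_zero)
  next
    case 2
    define w where "w xs = (-1) ^ (m + 1) * cbr \<Theta> k m u g xs" for xs
    have w: "cyclic_cochain sm (k + m - 1) w"
      unfolding w_def using 2(2) g by (intro cyclic_cochain_scale cbr_cyclic) (auto simp: cyc_cocycle_def)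
    have cbr: "cbr \<Theta> n m f g = hoch_d (k + m - 1) w"
      unfolding 2 w_def by (rule cbr_hoch_d_left[OF 2(2) g])
    show ?thesis
    proof (cases "k + m = 0")
      case True
      then have "w = (\<lambda>_. 0)" unfolding w_def by (simp add: cbr_0_0)
      then show ?thesis by (simp add: cbr hoch_d_zero cyc_coboundary_zero)
    next
      case False
      then have "n + m - 1 = Suc (k + m - 1)" using 2(1) by simp
      then show ?thesis unfolding cyc_coboundary_def cbr using w by blast
    qed
  qed
qed

lemma cbr_coboundary_right:
  assumes f: "cyc_cocycle sm n f" "cyc_coboundary sm n f" and g: "cyc_cocycle sm m g"
  shows "cyc_coboundary sm (n + m - 1) (cbr \<Theta> m n g f)"
proof -
  have "cbr \<Theta> m n g f = (\<lambda>xs. - ((-1) ^ ((n + 1) * (m + 1))) * cbr \<Theta> n m f g xs)"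
    by (rule ext) (subst cbr_antisym, simp)
  then show ?thesis using cyc_coboundary_scale[OF cbr_coboundary_left[OF f g]] by simp
qed

lemma cbr_cbr_eq_of_hoch:
  assumes f: "cochain sm n f" and g: "cochain sm m g" and h: "cochain sm p h"
  shows "cbr \<Theta> n (m + p - 1) f (cbr \<Theta> m p g h) =
    of_hoch (n + m + p - 2) (gbracket n (m + p - 1) (to_hoch \<Theta> f) (gbracket m p (to_hoch \<Theta> g) (to_hoch \<Theta> h)))"
proof -
  have X: "hoch_cochain (m + p - 1) (gbracket m p (to_hoch \<Theta> g) (to_hoch \<Theta> h))"
    by (rule hoch_cochain_gbracket[OF hoch_cochain_to_hoch[OF g] hoch_cochain_to_hoch[OF h]])
  have ch: "cochain sm (m + p - 1) (cbr \<Theta> m p g h)" by (rule cochain_cbr[OF g h])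
  have th: "to_hoch \<Theta> (cbr \<Theta> m p g h) = gbracket m p (to_hoch \<Theta> g) (to_hoch \<Theta> h)"
    unfolding cbr_eq_of_hoch[OF g h] by (rule to_hoch_of_hoch[OF X])
  have e: "cbr \<Theta> n (m + p - 1) f (cbr \<Theta> m p g h) =
    of_hoch (n + (m + p - 1) - 1) (gbracket n (m + p - 1) (to_hoch \<Theta> f) (gbracket m p (to_hoch \<Theta> g) (to_hoch \<Theta> h)))"
    unfolding cbr_eq_of_hoch[OF f ch] th ..
  show ?thesis
  proof (cases "m + p = 0")
    case True
    then have "gbracket m p (to_hoch \<Theta> g) (to_hoch \<Theta> h) = (\<lambda>_. 0)" by (auto simp: gbracket_def gcomp_def)
    moreover have "gbracket n (m + p - 1) (to_hoch \<Theta> f) (\<lambda>_. 0) = (\<lambda>_. 0)"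
      by (rule ext) (rule gbracket_zero_right[OF hoch_cochain_to_hoch[OF f]])
    ultimately show ?thesis unfolding e by (simp only: of_hoch_zero)
  next
    case False
    then have "n + (m + p - 1) - 1 = n + m + p - 2" by arith
    then show ?thesis unfolding e by simp
  qed
qed

lemma cbr_cbr_degenerate:
  assumes f: "cochain sm n f" and s: "n + m + p \<le> 1"
  shows "cbr \<Theta> n (m + p - 1) f (cbr \<Theta> m p g h) = (\<lambda>_. 0)"
proof (cases "m + p = 0")
  case True
  then have "cbr \<Theta> m p g h = (\<lambda>_. 0)" using cbr_0_0 by simp
  then show ?thesis using cbr_zero_right[OF f] by simp
next
  case False
  then have "n = 0" "m + p - 1 = 0" using s by auto
  then show ?thesis using cbr_0_0 by simp
qed

lemma cbr_jacobi:
  assumes f: "cochain sm n f" and g: "cochain sm m g" and h: "cochain sm p h"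
  shows "(-1) ^ ((n + 1) * (p + 1)) * cbr \<Theta> n (m + p - 1) f (cbr \<Theta> m p g h) xs
    + (-1) ^ ((m + 1) * (n + 1)) * cbr \<Theta> m (p + n - 1) g (cbr \<Theta> p n h f) xs
    + (-1) ^ ((p + 1) * (m + 1)) * cbr \<Theta> p (n + m - 1) h (cbr \<Theta> n m f g) xs = 0"
proof (cases "2 \<le> n + m + p")
  case False
  then have s: "n + m + p \<le> 1" by simp
  show ?thesis
    using cbr_cbr_degenerate[OF f s, of g h] cbr_cbr_degenerate[OF g, of p n h f]
      cbr_cbr_degenerate[OF h, of n m f g] s
    by (simp add: add_ac)
next
  case True
  define N where "N = n + m + p - 2"
  have t: "cbr \<Theta> m (p + n - 1) g (cbr \<Theta> p n h f) =
      of_hoch N (gbracket m (p + n - 1) (to_hoch \<Theta> g) (gbracket p n (to_hoch \<Theta> h) (to_hoch \<Theta> f)))"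
    "cbr \<Theta> p (n + m - 1) h (cbr \<Theta> n m f g) =
      of_hoch N (gbracket p (n + m - 1) (to_hoch \<Theta> h) (gbracket n m (to_hoch \<Theta> f) (to_hoch \<Theta> g)))"
    using cbr_cbr_eq_of_hoch[OF g h f] cbr_cbr_eq_of_hoch[OF h f g] unfolding N_def by (simp_all add: ac_simps)
  show ?thesis
    unfolding t cbr_cbr_eq_of_hoch[OF f g h, folded N_def] of_hoch_sign[symmetric] of_hoch_add
  proof (intro of_hoch_eq_0 gbracket_jacobi)
    show "hoch_cochain n (to_hoch \<Theta> f)" "hoch_cochain m (to_hoch \<Theta> g)" "hoch_cochain p (to_hoch \<Theta> h)"
      using f g h by (auto intro: hoch_cochain_to_hoch)
  qed (use True N_def in auto)
qed

end

theorem corollary5p11: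
  fixes sm :: "'k::comm_ring_1 \<Rightarrow> 'a::ring_1 \<Rightarrow> 'a"
    and \<Theta> :: "'a \<Rightarrow> 'a \<Rightarrow> 'k"
  assumes "symm_frobenius sm \<Theta>"
  shows "(\<forall>n m f f' g c. cyclic_cochain sm n f \<and> cyclic_cochain sm n f' \<and> cyclic_cochain sm m g \<longrightarrow>
        cbr \<Theta> n m (\<lambda>xs. f xs + f' xs) g = (\<lambda>xs. cbr \<Theta> n m f g xs + cbr \<Theta> n m f' g xs)
      \<and> cbr \<Theta> n m (\<lambda>xs. c * f xs) g = (\<lambda>xs. c * cbr \<Theta> n m f g xs)
      \<and> cbr \<Theta> m n g (\<lambda>xs. f xs + f' xs) = (\<lambda>xs. cbr \<Theta> m n g f xs + cbr \<Theta> m n g f' xs)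
      \<and> cbr \<Theta> m n g (\<lambda>xs. c * f xs) = (\<lambda>xs. c * cbr \<Theta> m n g f xs))
   \<and> (\<forall>n m f g. cyc_cocycle sm n f \<and> cyc_cocycle sm m g \<longrightarrow>
        cyc_cocycle sm (n + m - 1) (cbr \<Theta> n m f g))
   \<and> (\<forall>n m f g. cyc_cocycle sm n f \<and> cyc_coboundary sm n f \<and> cyc_cocycle sm m g \<longrightarrow>
        cyc_coboundary sm (n + m - 1) (cbr \<Theta> n m f g)
      \<and> cyc_coboundary sm (n + m - 1) (cbr \<Theta> m n g f))
   \<and> (\<forall>n m f g. cyc_cocycle sm n f \<and> cyc_cocycle sm m g \<longrightarrow>
        cyc_coboundary sm (n + m - 1)
          (\<lambda>xs. cbr \<Theta> n m f g xs + (-1) ^ ((n + 1) * (m + 1)) * cbr \<Theta> m n g f xs))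
   \<and> (\<forall>n m p f g h. cyc_cocycle sm n f \<and> cyc_cocycle sm m g \<and> cyc_cocycle sm p h \<longrightarrow>
        cyc_coboundary sm (n + m + p - 2)
          (\<lambda>xs. (-1) ^ ((n + 1) * (p + 1)) * cbr \<Theta> n (m + p - 1) f (cbr \<Theta> m p g h) xs
              + (-1) ^ ((m + 1) * (n + 1)) * cbr \<Theta> m (p + n - 1) g (cbr \<Theta> p n h f) xs
              + (-1) ^ ((p + 1) * (m + 1)) * cbr \<Theta> p (n + m - 1) h (cbr \<Theta> n m f g) xs))"
proof -
  interpret symm_frob sm \<Theta>
    using assms unfolding symm_frob_def symm_frob_axioms_def k_algebra_def
    by (simp add: symm_frobenius_def)
  show ?thesis
    by (intro conjI allI impI; (elim conjE)?;
        blast intro: cbr_linear cyclic_cochain_cochain cbr_cocycle cbr_coboundary_left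
          cbr_coboundary_right cyc_coboundary_zero cbr_antisym_sum cbr_jacobi cyc_cocycle_cochain)
qed

end
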